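(* In every optimal schedule for $\mathcal I^{FE}$ (minimizing total flow plus energy), each of the jobs $n+1,\dots,2n+1$ has average speed $s_1=1$ (i.e., processing time equal to its volume).
   Context: Model: jobs with release times and volumes (unit weights) on a processor with allowed speeds $0<s_1<s_2$ and powers $0<P_1<P_2$; a schedule assigns at each time at most one released unfinished job and a speed (preemption allowed), feasible if each job receives its full volume; flow $F=\sum_j(C_j-r_j)$ with $C_j$ the completion time, energy $E=\int P_{S(t)}dt$. Construction: Let $\mathcal I^B$ be a B-IDUA instance (minimize total flow subject to energy $\le B$) with two speeds $s_1=1<s_2$, powers $P_1<P_2$, budget $B$, and jobs $1,\dots,n$ with volumes $v_j$, release times $r_j$ ($\min r_j=0$). Let $V=\sum_{j=1}^nv_j$ and assume $P_1V<B<P_2V/s_2$. Let $\Delta_1=\frac{P_2s_1-P_1s_2}{s_2-s_1}$ and $Y=(B-P_1V)/\Delta_1$. Let $\sigma_1$ be the SRPT (shortest remaining processing time) schedule of $\mathcal I^B$ processing every job at speed $s_1$, $C_{\max}(\sigma_1)$ its makespan and $I(\sigma_1)=C_{\max}(\sigma_1)-V$. The FE-IDUA instance $\mathcal I^{FE}$ has $2n+1$ unit-weight jobs: jobs $1,\dots,n$ identical to those of $\mathcal I^B$; job $n+1$ with volume $I(\sigma_1)+(s_2+1)V+Y$ and release time $0$; jobs $n+2,\dots,2n+1$ with volume $Y+1$ and release time $C_{\max}(\sigma_1)+(s_2+1)V$. Its speeds are $s_1,s_2$ with powers $\tilde P_1=P_1$ and $\tilde P_2=(n+\tfrac32)(s_2-1)+P_1s_2$.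 *)

theory Defs
  imports "HOL-Analysis.Analysis"
begin

text \<open>A schedule on a single processor is a pair (J, S): J t is the job processed at
time t (None = idle), S t is the speed used at time t (relevant only when J t is not None).\<close>

definition work :: "(real \<Rightarrow> nat option) \<Rightarrow> (real \<Rightarrow> real) \<Rightarrow> nat \<Rightarrow> real \<Rightarrow> real" where
  "work J S j t = (LINT u:{0..t}|lborel. (if J u = Some j then S u else 0))"

definition remaining :: "(nat \<Rightarrow> real) \<Rightarrow> (real \<Rightarrow> nat option) \<Rightarrow> (real \<Rightarrow> real) \<Rightarrow> nat \<Rightarrow> real \<Rightarrow> real" where
  "remaining v J S j t = v j - work J S j t"

definition compl :: "(nat \<Rightarrow> real) \<Rightarrow> (real \<Rightarrow> nat option) \<Rightarrow> (real \<Rightarrow> real) \<Rightarrow> nat \<Rightarrow> real" where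
  "compl v J S j = Inf {t. v j \<le> work J S j t}"

definition feasible :: "nat \<Rightarrow> (nat \<Rightarrow> real) \<Rightarrow> (nat \<Rightarrow> real) \<Rightarrow> real \<Rightarrow> real
    \<Rightarrow> (real \<Rightarrow> nat option) \<Rightarrow> (real \<Rightarrow> real) \<Rightarrow> bool" where
  "feasible m v r s1 s2 J S \<longleftrightarrow>
     J \<in> measurable lborel (count_space UNIV) \<and> S \<in> borel_measurable lborel \<and>
     (\<forall>t j. J t = Some j \<longrightarrow>
        j \<in> {1..m} \<and> r j \<le> t \<and> work J S j t < v j \<and> (S t = s1 \<or> S t = s2)) \<and>
     (\<forall>j\<in>{1..m}. \<exists>t. v j \<le> work J S j t)"

definition power :: "real \<Rightarrow> real \<Rightarrow> real \<Rightarrow> (real \<Rightarrow> nat option) \<Rightarrow> (real \<Rightarrow> real) \<Rightarrow> real \<Rightarrow> real" where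
  "power s1 P1 P2 J S t = (if J t = None then 0 else if S t = s1 then P1 else P2)"

definition energy :: "real \<Rightarrow> real \<Rightarrow> real \<Rightarrow> (real \<Rightarrow> nat option) \<Rightarrow> (real \<Rightarrow> real) \<Rightarrow> real" where
  "energy s1 P1 P2 J S = (LINT t:{0..}|lborel. power s1 P1 P2 J S t)"

definition flow :: "nat \<Rightarrow> (nat \<Rightarrow> real) \<Rightarrow> (nat \<Rightarrow> real) \<Rightarrow> (real \<Rightarrow> nat option) \<Rightarrow> (real \<Rightarrow> real) \<Rightarrow> real" where
  "flow m v r J S = (\<Sum>j\<in>{1..m}. compl v J S j - r j)"

definition optimal_FE :: "nat \<Rightarrow> (nat \<Rightarrow> real) \<Rightarrow> (nat \<Rightarrow> real) \<Rightarrow> real \<Rightarrow> real \<Rightarrow> real \<Rightarrow> real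
    \<Rightarrow> (real \<Rightarrow> nat option) \<Rightarrow> (real \<Rightarrow> real) \<Rightarrow> bool" where
  "optimal_FE m v r s1 s2 P1 P2 J S \<longleftrightarrow>
     feasible m v r s1 s2 J S \<and>
     (\<forall>J' S'. feasible m v r s1 s2 J' S' \<longrightarrow>
        flow m v r J S + energy s1 P1 P2 J S \<le> flow m v r J' S' + energy s1 P1 P2 J' S')"

definition proc_time :: "(real \<Rightarrow> nat option) \<Rightarrow> nat \<Rightarrow> real" where
  "proc_time J j = measure lborel {t. J t = Some j}"

definition avg_speed :: "(nat \<Rightarrow> real) \<Rightarrow> (real \<Rightarrow> nat option) \<Rightarrow> nat \<Rightarrow> real" where
  "avg_speed v J j = v j / proc_time J j"

definition is_SRPT :: "nat \<Rightarrow> (nat \<Rightarrow> real) \<Rightarrow> (nat \<Rightarrow> real) \<Rightarrow> real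
    \<Rightarrow> (real \<Rightarrow> nat option) \<Rightarrow> (real \<Rightarrow> real) \<Rightarrow> bool" where
  "is_SRPT n v r s1 J S \<longleftrightarrow>
     feasible n v r s1 s1 J S \<and>
     (\<forall>t j. j \<in> {1..n} \<and> r j \<le> t \<and> work J S j t < v j \<longrightarrow>
        (\<exists>i. J t = Some i \<and> remaining v J S i t \<le> remaining v J S j t))"

definition makespan :: "nat \<Rightarrow> (nat \<Rightarrow> real) \<Rightarrow> (real \<Rightarrow> nat option) \<Rightarrow> (real \<Rightarrow> real) \<Rightarrow> real" where
  "makespan n v J S = Max (compl v J S ` {1..n})"

text \<open>The FE-IDUA instance built from the B-IDUA instance (s1 = 1); Cm = C_max(sigma_1).\<close>
definition Yval :: "nat \<Rightarrow> (nat \<Rightarrow> real) \<Rightarrow> real \<Rightarrow> real \<Rightarrow> real \<Rightarrow> real \<Rightarrow> real" where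
  "Yval n v s2 P1 P2 B =
     (let V = (\<Sum>j\<in>{1..n}. v j); \<Delta>1 = (P2 * 1 - P1 * s2) / (s2 - 1) in (B - P1 * V) / \<Delta>1)"

definition FE_vol :: "nat \<Rightarrow> (nat \<Rightarrow> real) \<Rightarrow> real \<Rightarrow> real \<Rightarrow> real \<Rightarrow> real \<Rightarrow> real \<Rightarrow> nat \<Rightarrow> real" where
  "FE_vol n v s2 P1 P2 B Cm j =
     (let V = (\<Sum>i\<in>{1..n}. v i); Y = Yval n v s2 P1 P2 B in
      if j \<le> n then v j
      else if j = n + 1 then (Cm - V) + (s2 + 1) * V + Y
      else Y + 1)"

definition FE_rel :: "nat \<Rightarrow> (nat \<Rightarrow> real) \<Rightarrow> (nat \<Rightarrow> real) \<Rightarrow> real \<Rightarrow> real \<Rightarrow> nat \<Rightarrow> real" where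
  "FE_rel n v r s2 Cm j =
     (let V = (\<Sum>i\<in>{1..n}. v i) in
      if j \<le> n then r j
      else if j = n + 1 then 0
      else Cm + (s2 + 1) * V)"

definition FE_P2 :: "nat \<Rightarrow> real \<Rightarrow> real \<Rightarrow> real" where
  "FE_P2 n s2 P1 = (real n + 3/2) * (s2 - 1) + P1 * s2"

end

theory Submission
  imports Defs
begin

text \<open>
  The proof is an exchange argument against a fixed optimal schedule. Three local modifications
  are used: handing the processing of two released jobs to one of them until it completes,
  using idle time to finish a job earlier, and running part of a job's fast processing at
  speed 1 while delaying the rest of the schedule into an idle gap.

  The first two decrease the total flow without increasing the energy (as P1 s2 \<le> P2). So in
  an optimal schedule neither the joint work of two unfinished jobs nor the work of a job plus
  the idle time ever covers its remaining volume; consequently every original job completes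
  before the jobs n + 2, ..., 2n + 1 are released. Slowing down fast processing of measure a
  costs d = (s2 - 1) a of extra time, delays only the jobs completing in the shifted window and
  changes the energy by P1 (a + d) - P2 a, so optimality gives P2 \<le> (s2 - 1) K + P1 s2 for the
  number K of delayed jobs. If an added job ran fast on a set of positive measure, the window
  could be chosen with K \<le> n + 1, contradicting P2 = (n + 3/2) (s2 - 1) + P1 s2. Hence the
  added jobs run at speed 1 almost everywhere.
\<close>

section \<open>Time sets and first hitting times\<close>

definition meas_upto :: "real set \<Rightarrow> real \<Rightarrow> real" where
  "meas_upto X t = measure lborel (X \<inter> {0..t})"

lemma fmeasurable_Icc: "{a..b::real} \<in> fmeasurable lborel"
  using fmeasurable_cbox[of a b] by (simp only: cbox_interval)

lemma fmeasurable_subset_Icc: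
  "X \<in> sets lborel \<Longrightarrow> X \<subseteq> {a..b::real} \<Longrightarrow> X \<in> fmeasurable lborel"
  using fmeasurableI2[OF fmeasurable_Icc[of a b]] by blast

lemma fmeasurable_Int_Icc: "X \<in> sets lborel \<Longrightarrow> X \<inter> {a..b::real} \<in> fmeasurable lborel"
  by (rule fmeasurable_subset_Icc[of _ a b]) auto

lemma measure_Un_disjoint:
  "A \<in> fmeasurable M \<Longrightarrow> B \<in> fmeasurable M \<Longrightarrow> A \<inter> B = {} \<Longrightarrow>
    measure M (A \<union> B) = measure M A + measure M B"
  using measure_Un3[of A M B] by simp

lemma measure_Int_Ioc_le:
  "X \<in> sets lborel \<Longrightarrow> s \<le> t \<Longrightarrow> measure lborel (X \<inter> {s<..t}) \<le> t - s"
proof -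
  assume "X \<in> sets lborel" "s \<le> t"
  then have "measure lborel (X \<inter> {s<..t}) \<le> measure lborel {s..t}"
    by (intro measure_mono_fmeasurable) (auto simp: fmeasurable_Icc)
  with \<open>s \<le> t\<close> show ?thesis by simp
qed

lemma measure_translate:
  assumes "Y \<in> sets lborel"
  shows "measure lborel {x::real. x - d \<in> Y} = measure lborel Y"
proof -
  have "((+) (-d)) \<in> measurable lborel (borel :: real measure)" by simp
  then have "measure (distr lborel borel ((+) (-d))) Y = measure lborel (((+) (-d)) -` Y \<inter> space lborel)"
    by (rule measure_distr) (use assms in simp)
  moreover have "((+) (-d)) -` Y \<inter> space lborel = {x. x - d \<in> Y}" by auto
  ultimately show ?thesis using lborel_distr_plus[of "-d"] by simp
qed

lemma sets_lborel_translate: "Y \<in> sets lborel \<Longrightarrow> {x::real. x - d \<in> Y} \<in> sets lborel"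
  using measurable_sets[of "\<lambda>x::real. x - d" borel borel Y] by (simp add: vimage_def)

lemma meas_upto_empty [simp]: "meas_upto {} t = 0"
  by (simp add: meas_upto_def)

lemma meas_upto_nonneg: "0 \<le> meas_upto X t"
  by (simp add: meas_upto_def)

lemma meas_upto_nonpos: "t \<le> 0 \<Longrightarrow> meas_upto X t = 0"
  by (cases "t = 0"; cases "0 \<in> X") (auto simp: meas_upto_def)

lemma meas_upto_eq_measure: "X \<subseteq> {0..t} \<Longrightarrow> meas_upto X t = measure lborel X"
  by (simp add: meas_upto_def Int_absorb2)

lemma meas_upto_subset_atLeast: "X \<subseteq> {p..} \<Longrightarrow> t \<le> p \<Longrightarrow> meas_upto X t = 0"
proof -
  assume "X \<subseteq> {p..}" "t \<le> p"
  then have "X \<inter> {0..t} \<subseteq> {t}" by auto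
  then show ?thesis by (auto dest: subset_singletonD simp: meas_upto_def)
qed

lemma meas_upto_split:
  assumes X: "X \<in> sets lborel" and "0 \<le> s" "s \<le> t"
  shows "meas_upto X t = meas_upto X s + measure lborel (X \<inter> {s<..t})"
proof -
  have "X \<inter> {0..t} = (X \<inter> {0..s}) \<union> (X \<inter> {s<..t})" using assms by auto
  moreover have "X \<inter> {s<..t} \<in> fmeasurable lborel"
    by (rule fmeasurable_subset_Icc[of _ s t]) (use X in auto)
  moreover have "X \<inter> {0..s} \<inter> (X \<inter> {s<..t}) = {}" by auto
  ultimately show ?thesis
    using measure_Un_disjoint[OF fmeasurable_Int_Icc[OF X, of 0 s], of "X \<inter> {s<..t}"]
    by (simp add: meas_upto_def)
qed

lemma meas_upto_mono: "X \<in> sets lborel \<Longrightarrow> s \<le> t \<Longrightarrow> meas_upto X s \<le> meas_upto X t"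
  using meas_upto_split[of X s t] meas_upto_nonpos[of s X] meas_upto_nonneg[of X t]
  by (cases "0 \<le> s") auto

lemma meas_upto_increment_le:
  assumes X: "X \<in> sets lborel" and st: "s \<le> t"
  shows "meas_upto X t - meas_upto X s \<le> t - s"
proof (cases "0 \<le> s")
  case True
  then show ?thesis using meas_upto_split[OF X True st] measure_Int_Ioc_le[OF X st] by simp
next
  case False
  then have "meas_upto X s = 0" by (simp add: meas_upto_nonpos)
  moreover have "meas_upto X t \<le> max 0 t"
  proof (cases "0 \<le> t")
    case True
    then show ?thesis
      using meas_upto_split[OF X order_refl True] measure_Int_Ioc_le[OF X True]
        meas_upto_nonpos[of 0 X] by simp
  qed (simp add: meas_upto_nonpos)
  ultimately show ?thesis using False st by simp
qed

lemma continuous_on_meas_upto: "X \<in> sets lborel \<Longrightarrow> continuous_on A (meas_upto X)"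
proof -
  assume X: "X \<in> sets lborel"
  have "\<bar>meas_upto X t - meas_upto X s\<bar> \<le> \<bar>t - s\<bar>" for s t
    using meas_upto_increment_le[OF X, of s t] meas_upto_increment_le[OF X, of t s]
      meas_upto_mono[OF X, of s t] meas_upto_mono[OF X, of t s]
    by (cases "s \<le> t") auto
  then have "1-lipschitz_on A (meas_upto X)"
    by (intro lipschitz_onI) (auto simp: dist_real_def)
  then show ?thesis by (rule lipschitz_on_continuous_on)
qed

lemma meas_upto_Un:
  assumes "X \<in> sets lborel" "Y \<in> sets lborel" "X \<inter> Y = {}"
  shows "meas_upto (X \<union> Y) t = meas_upto X t + meas_upto Y t"
proof -
  have "(X \<union> Y) \<inter> {0..t} = (X \<inter> {0..t}) \<union> (Y \<inter> {0..t})" by auto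
  moreover have "(X \<inter> {0..t}) \<inter> (Y \<inter> {0..t}) = {}" using assms(3) by auto
  ultimately show ?thesis
    using measure_Un_disjoint[OF fmeasurable_Int_Icc[OF assms(1)] fmeasurable_Int_Icc[OF assms(2)]]
    by (simp add: meas_upto_def)
qed

lemma meas_upto_Diff:
  assumes X: "X \<in> sets lborel" and Y: "Y \<in> sets lborel" and "Y \<subseteq> X"
  shows "meas_upto (X - Y) t = meas_upto X t - meas_upto Y t"
proof -
  have "(X - Y) \<inter> {0..t} = (X \<inter> {0..t}) - (Y \<inter> {0..t})" by auto
  moreover have "measure lborel (X \<inter> {0..t} - Y \<inter> {0..t}) =
      measure lborel (X \<inter> {0..t}) - measure lborel (Y \<inter> {0..t})"
    using fmeasurable_Int_Icc[OF X, of 0 t] assms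
    by (intro measure_Diff) (auto simp: fmeasurable_def)
  ultimately show ?thesis by (simp add: meas_upto_def)
qed

lemma meas_upto_UN:
  assumes "finite K" "\<And>k. k \<in> K \<Longrightarrow> X k \<in> sets lborel" "disjoint_family_on X K"
  shows "meas_upto (\<Union>k\<in>K. X k) t = (\<Sum>k\<in>K. meas_upto (X k) t)"
proof -
  have "(\<Union>k\<in>K. X k) \<inter> {0..t} = (\<Union>k\<in>K. X k \<inter> {0..t})" by auto
  moreover have disj: "disjoint_family_on (\<lambda>k. X k \<inter> {0..t}) K"
    using assms(3) by (auto simp: disjoint_family_on_def)
  moreover have "measure lborel (\<Union>k\<in>K. X k \<inter> {0..t}) = (\<Sum>k\<in>K. measure lborel (X k \<inter> {0..t}))"
  proof (rule measure_finite_Union)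
    show "emeasure lborel (X k \<inter> {0..t}) \<noteq> \<infinity>" if "k \<in> K" for k
      using fmeasurableD2[OF fmeasurable_Int_Icc[OF assms(2)[OF that]]] by simp
  qed (use assms(1,2) disj in auto)
  ultimately show ?thesis by (simp add: meas_upto_def)
qed

lemma measure_Int_Ico_eq_meas_upto:
  assumes X: "X \<in> sets lborel"
  shows "measure lborel (X \<inter> {0..<p}) = meas_upto X p"
proof (cases "p \<in> X \<and> 0 \<le> p")
  case True
  then have "X \<inter> {0..p} = (X \<inter> {0..<p}) \<union> {p}" by auto
  moreover have "{p} \<in> null_sets lborel" by (simp add: null_sets_def)
  ultimately show ?thesis
    using X measure_Un_null_set[of "X \<inter> {0..<p}" lborel "{p}"] by (simp add: meas_upto_def)
next
  case False
  then have "X \<inter> {0..p} = X \<inter> {0..<p}" by (auto simp: le_less)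
  then show ?thesis by (simp add: meas_upto_def)
qed

lemma meas_upto_Int_lessThan:
  assumes "X \<in> sets lborel"
  shows "meas_upto (X \<inter> {..<p}) t = meas_upto X (min p t)"
proof (cases "t < p")
  case True
  then have "X \<inter> {..<p} \<inter> {0..t} = X \<inter> {0..t}" by auto
  then show ?thesis using True by (simp add: meas_upto_def)
next
  case False
  then have "X \<inter> {..<p} \<inter> {0..t} = X \<inter> {0..<p}" by auto
  then show ?thesis
    using False measure_Int_Ico_eq_meas_upto[OF assms] by (simp add: meas_upto_def min_def)
qed

lemma obtain_subset_measure:
  assumes X: "X \<in> sets lborel" and "0 \<le> \<tau>" "0 \<le> a" "a \<le> meas_upto X \<tau>"
  obtains A where "A \<in> sets lborel" "A \<subseteq> X \<inter> {..<\<tau>}" "measure lborel A = a"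
proof -
  obtain x where x: "0 \<le> x" "x \<le> \<tau>" "meas_upto X x = a"
    using IVT'[of "meas_upto X" 0 a \<tau>] meas_upto_nonpos[of 0 X] assms continuous_on_meas_upto[OF X]
    by auto
  show ?thesis
  proof (rule that[of "X \<inter> {0..<x}"])
    show "measure lborel (X \<inter> {0..<x}) = a" using x measure_Int_Ico_eq_meas_upto[OF X, of x] by simp
  qed (use X x in auto)
qed

lemma meas_upto_Int_atLeast:
  assumes X: "X \<in> sets lborel"
  shows "meas_upto (X \<inter> {p..}) t = meas_upto X (max p t) - meas_upto X p"
proof -
  have "X \<inter> {p..} = X - X \<inter> {..<p}" by auto
  then have "meas_upto (X \<inter> {p..}) t = meas_upto X t - meas_upto X (min p t)"
    using meas_upto_Diff[OF X, of "X \<inter> {..<p}"] meas_upto_Int_lessThan[OF X] X by auto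
  then show ?thesis by (cases "p \<le> t") (auto simp: max_def min_def)
qed

lemma meas_upto_Int_atLeastLessThan:
  assumes X: "X \<in> sets lborel"
  shows "meas_upto (X \<inter> {p..<q}) t = meas_upto X (max p (min q t)) - meas_upto X p"
proof -
  have "X \<inter> {p..<q} = (X \<inter> {p..}) \<inter> {..<q}" by auto
  then show ?thesis
    using meas_upto_Int_lessThan[of "X \<inter> {p..}" q t] meas_upto_Int_atLeast[OF X] X by simp
qed

lemma meas_upto_gap:
  assumes X: "X \<in> sets lborel" and "0 \<le> a" "a \<le> b" and gap: "X \<inter> {a<..<b} = {}"
  shows "meas_upto X b = meas_upto X a"
proof -
  have "X \<inter> {a<..b} \<subseteq> {b}" using gap by auto
  then have "measure lborel (X \<inter> {a<..b}) \<le> measure lborel {b}"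
    by (intro measure_mono_fmeasurable) (use X fmeasurable_Icc[of b b] in auto)
  then show ?thesis using meas_upto_split[OF assms(1-3)] measure_nonneg[of lborel "X \<inter> {a<..b}"] by simp
qed

lemma meas_upto_translate:
  assumes X: "X \<in> sets lborel" and "0 \<le> p" "0 \<le> d"
  shows "meas_upto ({x. x - d \<in> X} \<inter> {p + d..}) t = meas_upto (X \<inter> {p..}) (t - d)"
proof -
  have "{x. x - d \<in> X} \<inter> {p + d..} \<inter> {0..t} = {x. x - d \<in> X \<inter> {p..} \<inter> {0..t - d}}"
    using assms by auto
  then show ?thesis
    using measure_translate[of "X \<inter> {p..} \<inter> {0..t - d}" d] X by (simp add: meas_upto_def)
qed

text \<open>The part of X in [\<tau>, \<sigma>) is delayed by d; the part in [\<sigma>, \<sigma> + d) is dropped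
  (in the applications it is empty).\<close>

definition delay_set :: "real \<Rightarrow> real \<Rightarrow> real \<Rightarrow> real set \<Rightarrow> real set" where
  "delay_set \<tau> \<sigma> d X =
    (X \<inter> {..<\<tau>}) \<union> ({x. x - d \<in> X \<inter> {..<\<sigma>}} \<inter> {\<tau> + d..}) \<union> (X \<inter> {\<sigma> + d..})"

definition delay_fun :: "real \<Rightarrow> real \<Rightarrow> real \<Rightarrow> (real \<Rightarrow> real) \<Rightarrow> real \<Rightarrow> real" where
  "delay_fun \<tau> \<sigma> d f t =
    f (min \<tau> t) + f (min \<sigma> (max \<tau> (t - d))) - f \<tau> + f (max (\<sigma> + d) t) - f (\<sigma> + d)"

lemma sets_lborel_delay_set: "X \<in> sets lborel \<Longrightarrow> delay_set \<tau> \<sigma> d X \<in> sets lborel"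
  unfolding delay_set_def using sets_lborel_translate[of "X \<inter> {..<\<sigma>}" d] by auto

lemma meas_upto_delay_set:
  assumes X: "X \<in> sets lborel" and "0 \<le> \<tau>" "\<tau> \<le> \<sigma>" "0 \<le> d"
  shows "meas_upto (delay_set \<tau> \<sigma> d X) t = delay_fun \<tau> \<sigma> d (meas_upto X) t"
proof -
  let ?A = "X \<inter> {..<\<tau>}"
  let ?B = "{x. x - d \<in> X \<inter> {..<\<sigma>}} \<inter> {\<tau> + d..}"
  let ?C = "X \<inter> {\<sigma> + d..}"
  have sets: "?A \<in> sets lborel" "?B \<in> sets lborel" "?C \<in> sets lborel"
    using X sets_lborel_translate[of "X \<inter> {..<\<sigma>}" d] by auto
  have "(?A \<union> ?B) \<inter> ?C = {}" "?A \<inter> ?B = {}" using assms by auto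
  then have "meas_upto (delay_set \<tau> \<sigma> d X) t = meas_upto ?A t + meas_upto ?B t + meas_upto ?C t"
    unfolding delay_set_def using sets by (simp add: meas_upto_Un)
  moreover have "meas_upto ?B t = meas_upto X (min \<sigma> (max \<tau> (t - d))) - meas_upto X \<tau>"
  proof -
    have "meas_upto ?B t = meas_upto (X \<inter> {..<\<sigma>} \<inter> {\<tau>..}) (t - d)"
      using meas_upto_translate[of "X \<inter> {..<\<sigma>}" \<tau> d t] X assms by simp
    also have "\<dots> = meas_upto X (min \<sigma> (max \<tau> (t - d))) - meas_upto X (min \<sigma> \<tau>)"
      using meas_upto_Int_atLeast[of "X \<inter> {..<\<sigma>}" \<tau>] meas_upto_Int_lessThan[OF X] X by simp
    finally show ?thesis using assms by (simp add: min_def)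
  qed
  ultimately show ?thesis
    unfolding delay_fun_def using meas_upto_Int_lessThan[OF X] meas_upto_Int_atLeast[OF X] by simp
qed

lemma delay_fun_linear:
  "delay_fun \<tau> \<sigma> d (\<lambda>t. f t + c * g t) t = delay_fun \<tau> \<sigma> d f t + c * delay_fun \<tau> \<sigma> d g t"
  by (simp add: delay_fun_def algebra_simps)

lemma delay_fun_eq:
  assumes "\<tau> \<le> \<sigma>" "0 \<le> d"
  shows "t \<le> \<tau> \<Longrightarrow> delay_fun \<tau> \<sigma> d f t = f t"
    and "\<tau> \<le> t \<Longrightarrow> t \<le> \<tau> + d \<Longrightarrow> delay_fun \<tau> \<sigma> d f t = f \<tau>"
    and "\<tau> + d \<le> t \<Longrightarrow> t \<le> \<sigma> + d \<Longrightarrow> delay_fun \<tau> \<sigma> d f t = f (t - d)"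
    and "\<sigma> + d \<le> t \<Longrightarrow> f (\<sigma> + d) = f \<sigma> \<Longrightarrow> delay_fun \<tau> \<sigma> d f t = f t"
  using assms by (auto simp: delay_fun_def max_absorb1 max_absorb2 min_absorb1 min_absorb2)

lemma first_reach:
  fixes f :: "real \<Rightarrow> real"
  assumes f: "continuous_on UNIV f" and "f a < c" "a \<le> b" "c \<le> f b"
  obtains x where "a < x" "x \<le> b" "f x = c" "\<And>s. a \<le> s \<Longrightarrow> s < x \<Longrightarrow> f s < c"
proof -
  let ?Z = "{s. a \<le> s \<and> c \<le> f s}"
  have "closed ?Z"
    using f by (intro closed_Collect_conj closed_Collect_le continuous_intros) auto
  moreover have ne: "?Z \<noteq> {}" and bdd: "bdd_below ?Z"
    using assms by (auto intro: bdd_belowI[of _ a])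
  ultimately have xZ: "Inf ?Z \<in> ?Z" by (rule closed_contains_Inf[rotated 2])
  have low: "Inf ?Z \<le> s" if "s \<in> ?Z" for s by (rule cInf_lower[OF that bdd])
  have ax: "a < Inf ?Z" using xZ assms(2) by (cases "a = Inf ?Z") auto
  obtain y where y: "a \<le> y" "y \<le> Inf ?Z" "f y = c"
    using IVT'[of f a c "Inf ?Z"] assms(2) xZ ax continuous_on_subset[OF f] by fastforce
  have "y = Inf ?Z" using low[of y] y by auto
  then show ?thesis using that[of "Inf ?Z"] ax low[of b] assms y low by force
qed

lemma Inf_level_set_eqI:
  fixes f :: "real \<Rightarrow> real"
  assumes "c \<le> f x" and "\<And>s. s < x \<Longrightarrow> f s < c"
  shows "Inf {s. c \<le> f s} = x"
  by (rule cInf_eq_minimum) (use assms in \<open>auto simp: not_less[symmetric]\<close>)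

lemma continuous_le_at_right_end:
  fixes f :: "real \<Rightarrow> real"
  assumes "continuous_on UNIV f" "a < b" "\<And>s. a \<le> s \<Longrightarrow> s < b \<Longrightarrow> f s \<le> c"
  shows "f b \<le> c"
proof -
  have "closure {a..<b} = {a..b}" using assms(2) by simp
  then show ?thesis
    using continuous_le_on_closure[of "{a..<b}" f b c] continuous_on_subset[OF assms(1)] assms(2,3)
    by auto
qed

section \<open>Schedules\<close>

lemma sets_lborel_schedule:
  fixes J :: "real \<Rightarrow> nat option" and S :: "real \<Rightarrow> real"
  assumes J: "J \<in> measurable lborel (count_space UNIV)" and S: "S \<in> borel_measurable lborel"
  shows "{u. P (J u)} \<in> sets lborel"
    and "{x. R x} \<in> sets borel \<Longrightarrow> {u. P (J u) \<and> R (S u)} \<in> sets lborel"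
    and "{u. P (J u) \<and> S u = c} \<in> sets lborel"
    and "{u. P (J u) \<and> S u \<noteq> c} \<in> sets lborel"
proof -
  show J_sets: "{u. P (J u)} \<in> sets lborel"
    using measurable_sets[OF J, of "{x. P x}"] by (simp add: vimage_def)
  show R_sets: "{u. P (J u) \<and> R (S u)} \<in> sets lborel" if "{x. R x} \<in> sets borel" for R
  proof -
    have "{u. P (J u) \<and> R (S u)} = {u. P (J u)} \<inter> S -` {x. R x}" by auto
    then show ?thesis using J_sets measurable_sets[OF S that] by simp
  qed
  have "{x::real. x = c} \<in> sets borel" "{x::real. x \<noteq> c} \<in> sets borel" by measurable
  from R_sets[OF this(1)] R_sets[OF this(2)]
  show "{u. P (J u) \<and> S u = c} \<in> sets lborel" "{u. P (J u) \<and> S u \<noteq> c} \<in> sets lborel" .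
qed

lemma work_eq_meas_upto:
  fixes J :: "real \<Rightarrow> nat option" and S :: "real \<Rightarrow> real"
  assumes J: "J \<in> measurable lborel (count_space UNIV)" and S: "S \<in> borel_measurable lborel"
    and speeds: "\<And>u. J u = Some k \<Longrightarrow> S u = 1 \<or> S u = s2"
  shows "work J S k t =
    meas_upto {u. J u = Some k \<and> S u = 1} t + s2 * meas_upto {u. J u = Some k \<and> S u \<noteq> 1} t"
proof -
  let ?A = "{u. J u = Some k \<and> S u = 1} \<inter> {0..t}"
  let ?B = "{u. J u = Some k \<and> S u \<noteq> 1} \<inter> {0..t}"
  have fm: "?A \<in> fmeasurable lborel" "?B \<in> fmeasurable lborel"
    using sets_lborel_schedule[OF J S] by (auto intro: fmeasurable_Int_Icc)
  have "indicator {0..t} u * (if J u = Some k then S u else 0) = indicator ?A u + s2 * indicator ?B u"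
    for u using speeds[of u] by (auto simp: indicator_def)
  then have "work J S k t = integral\<^sup>L lborel (\<lambda>u. indicator ?A u + s2 * indicator ?B u)"
    unfolding work_def set_lebesgue_integral_def by simp
  also have "\<dots> = measure lborel ?A + s2 * measure lborel ?B"
    using fm by (simp add: fmeasurable_def integrable_real_indicator)
  finally show ?thesis by (simp add: meas_upto_def)
qed

lemma energy_eq_meas_upto:
  fixes J :: "real \<Rightarrow> nat option" and S :: "real \<Rightarrow> real"
  assumes J: "J \<in> measurable lborel (count_space UNIV)" and S: "S \<in> borel_measurable lborel"
    and busy: "\<And>u. J u \<noteq> None \<Longrightarrow> 0 \<le> u \<and> u \<le> L"
  shows "energy 1 P1 P2 J S =
    P1 * meas_upto {u. J u \<noteq> None \<and> S u = 1} L + P2 * meas_upto {u. J u \<noteq> None \<and> S u \<noteq> 1} L"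
proof -
  let ?A = "{u. J u \<noteq> None \<and> S u = 1} \<inter> {0..L}"
  let ?B = "{u. J u \<noteq> None \<and> S u \<noteq> 1} \<inter> {0..L}"
  have fm: "?A \<in> fmeasurable lborel" "?B \<in> fmeasurable lborel"
    using sets_lborel_schedule[OF J S] by (auto intro: fmeasurable_Int_Icc)
  have "indicator {0..} u * power 1 P1 P2 J S u = P1 * indicator ?A u + P2 * indicator ?B u" for u
    using busy[of u] by (auto simp: indicator_def power_def)
  then have "energy 1 P1 P2 J S = integral\<^sup>L lborel (\<lambda>u. P1 * indicator ?A u + P2 * indicator ?B u)"
    unfolding energy_def set_lebesgue_integral_def by simp
  also have "\<dots> = P1 * measure lborel ?A + P2 * measure lborel ?B"
    using fm by (simp add: fmeasurable_def integrable_real_indicator)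
  finally show ?thesis by (simp add: meas_upto_def)
qed

locale feasible_schedule =
  fixes m :: nat and v r :: "nat \<Rightarrow> real" and s2 :: real
    and J :: "real \<Rightarrow> nat option" and S :: "real \<Rightarrow> real"
  assumes feasible: "feasible m v r 1 s2 J S" and s2: "1 < s2"
    and volume_pos: "\<And>k. k \<in> {1..m} \<Longrightarrow> 0 < v k"
    and release_nonneg: "\<And>k. k \<in> {1..m} \<Longrightarrow> 0 \<le> r k"
begin

lemma J_measurable: "J \<in> measurable lborel (count_space UNIV)"
  using feasible by (simp add: feasible_def)

lemma S_measurable: "S \<in> borel_measurable lborel"
  using feasible by (simp add: feasible_def)

lemmas sets_schedule = sets_lborel_schedule[OF J_measurable S_measurable]

lemma processing:
  "J t = Some k \<Longrightarrow> k \<in> {1..m} \<and> r k \<le> t \<and> work J S k t < v k \<and> (S t = 1 \<or> S t = s2)"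
  using feasible by (simp add: feasible_def)

lemma finishes: "k \<in> {1..m} \<Longrightarrow> \<exists>t. v k \<le> work J S k t"
  using feasible by (simp add: feasible_def)

abbreviation "Slow k \<equiv> {u. J u = Some k \<and> S u = 1}"
abbreviation "Fast k \<equiv> {u. J u = Some k \<and> S u \<noteq> 1}"
abbreviation "Proc k \<equiv> {u. J u = Some k}"
abbreviation "Idle \<equiv> {u. J u = None}"

lemma sets_Slow: "Slow k \<in> sets lborel"
  using sets_schedule(3)[of "\<lambda>x. x = Some k"] .

lemma sets_Fast: "Fast k \<in> sets lborel"
  using sets_schedule(4)[of "\<lambda>x. x = Some k"] .

lemma sets_Proc: "Proc k \<in> sets lborel"
  using sets_schedule(1)[of "\<lambda>x. x = Some k"] .

lemma sets_Idle: "Idle \<in> sets lborel"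
  using sets_schedule(1)[of "\<lambda>x. x = None"] .

lemma work_eq: "work J S k t = meas_upto (Slow k) t + s2 * meas_upto (Fast k) t"
  by (rule work_eq_meas_upto[OF J_measurable S_measurable]) (use processing in blast)

lemma continuous_work: "continuous_on UNIV (work J S k)"
  unfolding work_eq[abs_def] by (intro continuous_intros continuous_on_meas_upto sets_Slow sets_Fast)

lemma work_mono: "s \<le> t \<Longrightarrow> work J S k s \<le> work J S k t"
  unfolding work_eq using meas_upto_mono[OF sets_Slow, of s t k] meas_upto_mono[OF sets_Fast, of s t k] s2
  by (simp add: add_mono)

lemma work_nonneg: "0 \<le> work J S k t"
  unfolding work_eq using meas_upto_nonneg[of "Slow k" t] meas_upto_nonneg[of "Fast k" t] s2 by simp

lemma work_before_release: "t \<le> r k \<Longrightarrow> work J S k t = 0"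
proof -
  assume "t \<le> r k"
  moreover have "Slow k \<subseteq> {r k..}" "Fast k \<subseteq> {r k..}" using processing by auto
  ultimately show ?thesis by (simp add: work_eq meas_upto_subset_atLeast)
qed

definition C :: "nat \<Rightarrow> real" where "C k = compl v J S k"

lemma C_first_reach:
  assumes k: "k \<in> {1..m}"
  shows "r k < C k \<and> work J S k (C k) = v k \<and> (\<forall>s < C k. work J S k s < v k)"
proof -
  obtain b where b: "v k \<le> work J S k b" using finishes[OF k] by auto
  have before: "work J S k s < v k" if "s \<le> r k" for s
    using work_before_release[OF that] volume_pos[OF k] by simp
  have "r k \<le> b"
  proof (rule ccontr)
    assume "\<not> r k \<le> b"
    then show False using before[of b] b by simp
  qed
  then obtain x where x: "r k < x" "work J S k x = v k" "\<And>s. r k \<le> s \<Longrightarrow> s < x \<Longrightarrow> work J S k s < v k"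
    using first_reach[OF continuous_work before[OF order_refl] _ b] by blast
  have "work J S k s < v k" if "s < x" for s
    using x(3)[OF _ that] before[of s] by (cases "r k \<le> s") auto
  moreover from this have "C k = x"
    unfolding C_def compl_def by (intro Inf_level_set_eqI) (use x(2) in auto)
  ultimately show ?thesis using x by auto
qed

lemma release_less_C: "k \<in> {1..m} \<Longrightarrow> r k < C k"
  using C_first_reach by blast

lemma work_at_C: "k \<in> {1..m} \<Longrightarrow> work J S k (C k) = v k"
  using C_first_reach by blast

lemma work_less_before_C: "k \<in> {1..m} \<Longrightarrow> s < C k \<Longrightarrow> work J S k s < v k"
  using C_first_reach by blast

lemma Proc_before_C: "Proc k \<subseteq> {r k..<C k}"
proof
  fix t assume "t \<in> Proc k"
  then have k: "k \<in> {1..m}" and "r k \<le> t" "work J S k t < v k" using processing by auto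
  moreover have "\<not> C k \<le> t"
    using work_mono[of "C k" t k] work_at_C[OF k] \<open>work J S k t < v k\<close> by linarith
  ultimately show "t \<in> {r k..<C k}" by simp
qed

lemma work_after_C:
  assumes k: "k \<in> {1..m}" and "C k \<le> t"
  shows "work J S k t = v k"
proof -
  have C: "0 \<le> C k" "C k \<le> t" using release_less_C[OF k] release_nonneg[OF k] assms(2) by auto
  have "Slow k \<inter> {C k<..<t} = {}" "Fast k \<inter> {C k<..<t} = {}" using Proc_before_C[of k] by auto
  then have "meas_upto (Slow k) t = meas_upto (Slow k) (C k)" "meas_upto (Fast k) t = meas_upto (Fast k) (C k)"
    using meas_upto_gap[OF sets_Slow C] meas_upto_gap[OF sets_Fast C] by auto
  then show ?thesis using work_at_C[OF k] by (simp add: work_eq)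
qed

lemma work_le_volume: "k \<in> {1..m} \<Longrightarrow> work J S k t \<le> v k"
  using work_after_C[of k t] work_less_before_C[of k t] by (cases "C k \<le> t") auto

definition Cmax :: real where "Cmax = Max (C ` {1..m})"

lemma C_le_Cmax: "k \<in> {1..m} \<Longrightarrow> C k \<le> Cmax"
  unfolding Cmax_def by (rule Max_ge) auto

lemma busy_le_Cmax: "J t \<noteq> None \<Longrightarrow> 0 \<le> t \<and> t \<le> Cmax"
proof -
  assume "J t \<noteq> None"
  then obtain k where k: "J t = Some k" by auto
  then have "k \<in> {1..m}" "t \<in> {r k..<C k}" using processing Proc_before_C[of k] by auto
  then show ?thesis using release_nonneg[of k] C_le_Cmax[of k] by auto
qed

lemma energy_eq:
  assumes "Cmax \<le> L"
  shows "energy 1 P1 P2 J S =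
    P1 * meas_upto {u. J u \<noteq> None \<and> S u = 1} L + P2 * meas_upto {u. J u \<noteq> None \<and> S u \<noteq> 1} L"
  by (rule energy_eq_meas_upto[OF J_measurable S_measurable]) (meson busy_le_Cmax assms order_trans)

lemma flow_eq: "flow m v r J S = (\<Sum>k\<in>{1..m}. C k - r k)"
  by (simp add: flow_def C_def)

end

section \<open>Exchange arguments\<close>

text \<open>Slowing down: on A the job j runs at speed 1 instead of s2; the lost work (s2 - 1) a
  is made up by running j at speed 1 during [\<tau>, \<tau> + d), and the schedule on [\<tau>, \<sigma>) is
  delayed by d into the idle interval [\<sigma>, \<sigma> + d).\<close>

locale slow_down = feasible_schedule +
  fixes j :: nat and \<tau> \<sigma> a :: real and A :: "real set"
  assumes j: "j \<in> {1..m}" and tau: "r j \<le> \<tau>" "\<tau> < C j" and sigma: "C j \<le> \<sigma>"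
    and a_pos: "0 < a" and idle: "\<And>t. \<sigma> \<le> t \<Longrightarrow> t < \<sigma> + (s2 - 1) * a \<Longrightarrow> J t = None"
    and sets_A: "A \<in> sets lborel" and A_Fast: "A \<subseteq> Fast j \<inter> {..<\<tau>}"
    and measure_A: "measure lborel A = a"
begin

definition d :: real where "d = (s2 - 1) * a"

lemma d_pos: "0 < d"
  using s2 a_pos by (simp add: d_def)

lemma tau_le_sigma: "\<tau> \<le> \<sigma>"
  using tau sigma by simp

lemma tau_nonneg: "0 \<le> \<tau>"
  using tau release_nonneg[OF j] by simp

definition J' :: "real \<Rightarrow> nat option" where
  "J' t = (if t < \<tau> then J t else if t < \<tau> + d then Some j else if t < \<sigma> + d then J (t - d) else J t)"

definition S' :: "real \<Rightarrow> real" where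
  "S' t = (if t < \<tau> then (if t \<in> A then 1 else S t) else if t < \<tau> + d then 1
    else if t < \<sigma> + d then S (t - d) else S t)"

lemma J'_measurable: "J' \<in> measurable lborel (count_space UNIV)"
proof -
  have "(\<lambda>t. J (t - d)) \<in> measurable lborel (count_space UNIV)"
    by (rule measurable_compose[OF _ J_measurable]) simp
  then show ?thesis unfolding J'_def by (intro measurable_If J_measurable) auto
qed

lemma S'_measurable: "S' \<in> borel_measurable lborel"
proof -
  have "(\<lambda>t. S (t - d)) \<in> borel_measurable lborel"
    by (rule measurable_compose[OF _ S_measurable]) simp
  then show ?thesis unfolding S'_def using sets_A by (intro measurable_If S_measurable) auto
qed

lemma slow_set':
  "{u. Q (J' u) \<and> S' u = 1} =
    delay_set \<tau> \<sigma> d {u. Q (J u) \<and> S u = 1} \<union> (if Q (Some j) then A \<union> {\<tau>..<\<tau> + d} else {})"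
  (is "?L = ?R")
proof -
  have "u \<in> ?L \<longleftrightarrow> u \<in> ?R" for u
  proof -
    consider "u < \<tau>" | "\<tau> \<le> u" "u < \<tau> + d" | "\<tau> + d \<le> u" "u < \<sigma> + d" | "\<sigma> + d \<le> u" by linarith
    then show ?thesis
      using A_Fast d_pos tau_le_sigma by cases (auto simp: J'_def S'_def delay_set_def)
  qed
  then show ?thesis by blast
qed

lemma fast_set':
  "{u. Q (J' u) \<and> S' u \<noteq> 1} = delay_set \<tau> \<sigma> d {u. Q (J u) \<and> S u \<noteq> 1} - (if Q (Some j) then A else {})"
  (is "?L = ?R")
proof -
  have "u \<in> ?L \<longleftrightarrow> u \<in> ?R" for u
  proof -
    consider "u < \<tau>" | "\<tau> \<le> u" "u < \<tau> + d" | "\<tau> + d \<le> u" "u < \<sigma> + d" | "\<sigma> + d \<le> u" by linarith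
    then show ?thesis
      using A_Fast d_pos tau_le_sigma by cases (auto simp: J'_def S'_def delay_set_def)
  qed
  then show ?thesis by blast
qed

lemma meas_upto_slow_set':
  "meas_upto {u. Q (J' u) \<and> S' u = 1} t = delay_fun \<tau> \<sigma> d (meas_upto {u. Q (J u) \<and> S u = 1}) t
    + (if Q (Some j) then meas_upto A t + meas_upto {\<tau>..<\<tau> + d} t else 0)"
proof -
  let ?X = "{u. Q (J u) \<and> S u = 1}"
  have X: "?X \<in> sets lborel" by (rule sets_schedule(3))
  have delay: "meas_upto (delay_set \<tau> \<sigma> d ?X) t = delay_fun \<tau> \<sigma> d (meas_upto ?X) t"
    using meas_upto_delay_set[OF X tau_nonneg tau_le_sigma] d_pos by simp
  have "delay_set \<tau> \<sigma> d ?X \<inter> (A \<union> {\<tau>..<\<tau> + d}) = {}" "A \<inter> {\<tau>..<\<tau> + d} = {}"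
    using A_Fast d_pos tau_le_sigma by (auto simp: delay_set_def)
  then show ?thesis
    using slow_set'[of Q] delay sets_A sets_lborel_delay_set[OF X]
    by (auto simp: meas_upto_Un)
qed

lemma meas_upto_fast_set':
  "meas_upto {u. Q (J' u) \<and> S' u \<noteq> 1} t = delay_fun \<tau> \<sigma> d (meas_upto {u. Q (J u) \<and> S u \<noteq> 1}) t
    - (if Q (Some j) then meas_upto A t else 0)"
proof -
  let ?X = "{u. Q (J u) \<and> S u \<noteq> 1}"
  have X: "?X \<in> sets lborel" by (rule sets_schedule(4))
  have delay: "meas_upto (delay_set \<tau> \<sigma> d ?X) t = delay_fun \<tau> \<sigma> d (meas_upto ?X) t"
    using meas_upto_delay_set[OF X tau_nonneg tau_le_sigma] d_pos by simp
  have "Q (Some j) \<Longrightarrow> A \<subseteq> delay_set \<tau> \<sigma> d ?X"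
    using A_Fast by (auto simp: delay_set_def)
  then show ?thesis
    using fast_set'[of Q] delay sets_A sets_lborel_delay_set[OF X]
    by (auto simp: meas_upto_Diff)
qed

lemma meas_upto_A: "\<tau> \<le> t \<Longrightarrow> meas_upto A t = a"
  using A_Fast processing[of _ j] measure_A release_nonneg[OF j] tau
  by (subst meas_upto_eq_measure) force+

lemma meas_upto_delay_interval:
  "meas_upto {\<tau>..<\<tau> + d} t = (if t \<le> \<tau> then 0 else if t \<le> \<tau> + d then t - \<tau> else d)"
proof -
  have "meas_upto (UNIV \<inter> {\<tau>..<\<tau> + d}) t = meas_upto UNIV (max \<tau> (min (\<tau> + d) t)) - meas_upto UNIV \<tau>"
    by (rule meas_upto_Int_atLeastLessThan) simp
  moreover have "meas_upto UNIV x = x" if "0 \<le> x" for x using that by (simp add: meas_upto_def)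
  ultimately show ?thesis using tau_nonneg d_pos by (auto simp: max_def min_def)
qed

definition work_change :: "real \<Rightarrow> real" where
  "work_change t = (1 - s2) * meas_upto A t + meas_upto {\<tau>..<\<tau> + d} t"

lemma work_change_nonpos: "work_change t \<le> 0"
proof (cases "t \<le> \<tau>")
  case True
  then show ?thesis
    using meas_upto_nonneg[of A t] s2 meas_upto_delay_interval[of t]
    by (simp add: work_change_def mult_nonpos_nonneg)
next
  case False
  then show ?thesis
    using meas_upto_A[of t] meas_upto_delay_interval[of t] by (auto simp: work_change_def d_def algebra_simps)
qed

lemma work_change_eq_0: "\<tau> + d \<le> t \<Longrightarrow> work_change t = 0"
  using meas_upto_A[of t] meas_upto_delay_interval[of t] d_pos
  by (auto simp: work_change_def d_def algebra_simps)

lemma speeds': "J' u = Some k \<Longrightarrow> S' u = 1 \<or> S' u = s2"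
proof -
  assume J': "J' u = Some k"
  consider "u < \<tau>" | "\<tau> \<le> u" "u < \<tau> + d" | "\<tau> + d \<le> u" "u < \<sigma> + d" | "\<sigma> + d \<le> u" by linarith
  then show ?thesis
    using J' processing[of u k] processing[of "u - d" k] d_pos tau_le_sigma
    by cases (auto simp: J'_def S'_def)
qed

lemma work':
  "work J' S' k t = delay_fun \<tau> \<sigma> d (work J S k) t + (if k = j then work_change t else 0)"
proof -
  have "work J' S' k t =
      meas_upto {u. J' u = Some k \<and> S' u = 1} t + s2 * meas_upto {u. J' u = Some k \<and> S' u \<noteq> 1} t"
    by (rule work_eq_meas_upto[OF J'_measurable S'_measurable speeds'])
  also have "\<dots> = delay_fun \<tau> \<sigma> d (meas_upto (Slow k)) t + s2 * delay_fun \<tau> \<sigma> d (meas_upto (Fast k)) t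
      + (if k = j then work_change t else 0)"
    unfolding meas_upto_slow_set'[of "\<lambda>x. x = Some k"] meas_upto_fast_set'[of "\<lambda>x. x = Some k"]
    by (simp add: work_change_def algebra_simps)
  also have "delay_fun \<tau> \<sigma> d (meas_upto (Slow k)) t + s2 * delay_fun \<tau> \<sigma> d (meas_upto (Fast k)) t =
      delay_fun \<tau> \<sigma> d (work J S k) t"
    unfolding work_eq[abs_def] by (rule delay_fun_linear[symmetric])
  finally show ?thesis .
qed

lemma sigma_nonneg: "0 \<le> \<sigma>"
  using release_less_C[OF j] release_nonneg[OF j] sigma by simp

lemma sigma_le: "\<sigma> \<le> \<sigma> + d"
  using d_pos by simp

lemma meas_upto_idle:
  "{u. Q (J u)} \<inter> {\<sigma><..<\<sigma> + d} = {} \<Longrightarrow> {u. Q (J u) \<and> R (S u)} \<in> sets lborel \<Longrightarrow>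
    meas_upto {u. Q (J u) \<and> R (S u)} (\<sigma> + d) = meas_upto {u. Q (J u) \<and> R (S u)} \<sigma>"
  by (rule meas_upto_gap[OF _ sigma_nonneg sigma_le]) auto

lemma work_idle: "work J S k (\<sigma> + d) = work J S k \<sigma>"
proof -
  have "Proc k \<inter> {\<sigma><..<\<sigma> + d} = {}" using idle by (auto simp: d_def)
  then show ?thesis
    using meas_upto_idle[OF _ sets_Slow] meas_upto_idle[OF _ sets_Fast] by (simp add: work_eq)
qed

definition C' :: "nat \<Rightarrow> real" where
  "C' k = (if C k \<le> \<tau> then C k else if C k \<le> \<sigma> then C k + d else C k)"

lemma work'_le: "work J' S' k t \<le> delay_fun \<tau> \<sigma> d (work J S k) t"
  using work'[of k t] work_change_nonpos[of t] by auto

lemma work'_after: "\<tau> + d \<le> t \<Longrightarrow> work J' S' k t = delay_fun \<tau> \<sigma> d (work J S k) t"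
  using work'[of k t] work_change_eq_0[of t] by auto

lemmas delay_fun_eq' = delay_fun_eq[OF tau_le_sigma less_imp_le[OF d_pos]]

lemma delay_fun_work_less:
  assumes k: "k \<in> {1..m}" and s: "s < C k + d" and sC: "\<tau> < C k" and s': "s \<le> \<sigma> + d \<or> s < C k"
  shows "delay_fun \<tau> \<sigma> d (work J S k) s < v k"
proof -
  consider (a) "s \<le> \<tau>" | (b) "\<tau> \<le> s" "s \<le> \<tau> + d" | (c) "\<tau> + d \<le> s" "s \<le> \<sigma> + d"
    | (e) "\<sigma> + d \<le> s" "s < C k"
    using s' by linarith
  then show ?thesis
  proof cases
    case a then show ?thesis using delay_fun_eq'(1)[of s] work_less_before_C[OF k, of s] sC by simp
  next
    case b then show ?thesis using delay_fun_eq'(2)[of s] work_less_before_C[OF k, of \<tau>] sC by simp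
  next
    case c then show ?thesis using delay_fun_eq'(3)[of s] work_less_before_C[OF k, of "s - d"] s by simp
  next
    case e
    then show ?thesis using delay_fun_eq'(4)[of s] work_idle[of k] work_less_before_C[OF k, of s] by simp
  qed
qed

lemma C_after_sigma: "k \<in> {1..m} \<Longrightarrow> \<sigma> < C k \<Longrightarrow> \<sigma> + d \<le> C k"
proof (rule ccontr)
  assume k: "k \<in> {1..m}" and sC: "\<sigma> < C k" and "\<not> \<sigma> + d \<le> C k"
  then have "work J S k (C k) \<le> work J S k (\<sigma> + d)" using work_mono by simp
  then show False using work_idle[of k] work_at_C[OF k] work_less_before_C[OF k, of \<sigma>] sC by simp
qed

lemma work'_C':
  assumes k: "k \<in> {1..m}"
  shows "work J' S' k (C' k) = v k" "\<And>s. s < C' k \<Longrightarrow> work J' S' k s < v k"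
proof -
  consider (a) "C k \<le> \<tau>" | (b) "\<tau> < C k" "C k \<le> \<sigma>" | (c) "\<sigma> < C k" by linarith
  then have "work J' S' k (C' k) = v k \<and> (\<forall>s < C' k. work J' S' k s < v k)"
  proof cases
    case a
    then have kj: "k \<noteq> j" using tau by auto
    have "C' k = C k" using a by (simp add: C'_def)
    moreover have "work J' S' k t = work J S k t" if "t \<le> \<tau>" for t
      using work'[of k t] kj delay_fun_eq'(1)[OF that] by simp
    ultimately show ?thesis using a work_at_C[OF k] work_less_before_C[OF k] by auto
  next
    case b
    have c2: "C' k = C k + d" using b by (simp add: C'_def)
    have "work J' S' k (C k + d) = work J S k (C k)"
      using work'_after[of "C k + d" k] delay_fun_eq'(3)[of "C k + d"] b d_pos by simp
    moreover have "work J' S' k s < v k" if "s < C k + d" for s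
      using work'_le[of k s] delay_fun_work_less[OF k that b(1)] that b(2) by fastforce
    ultimately show ?thesis using c2 work_at_C[OF k] by auto
  next
    case c
    have c2: "C' k = C k" using c tau_le_sigma by (simp add: C'_def)
    have kj: "k \<noteq> j" using c sigma by auto
    have big: "\<sigma> + d \<le> C k" using C_after_sigma[OF k c] .
    have "work J' S' k (C k) = work J S k (C k)"
      using work'[of k "C k"] kj delay_fun_eq'(4)[OF big work_idle[of k]] by simp
    moreover have "work J' S' k s < v k" if "s < C k" for s
    proof -
      have "delay_fun \<tau> \<sigma> d (work J S k) s < v k"
        by (rule delay_fun_work_less[OF k]) (use that c tau_le_sigma d_pos in auto)
      then show ?thesis using work'_le[of k s] by linarith
    qed
    ultimately show ?thesis using c2 work_at_C[OF k] by auto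
  qed
  then show "work J' S' k (C' k) = v k" "\<And>s. s < C' k \<Longrightarrow> work J' S' k s < v k" by auto
qed

lemma C_le_C': "C k \<le> C' k" using d_pos by (simp add: C'_def)

lemma C'_j: "C' j = C j + d" using tau sigma by (simp add: C'_def)

lemma processing':
  assumes J': "J' t = Some k"
  shows "k \<in> {1..m} \<and> r k \<le> t \<and> t < C' k \<and> (S' t = 1 \<or> S' t = s2)"
proof -
  consider (before) "t < \<tau>" | (inserted) "\<tau> \<le> t" "t < \<tau> + d" | (delayed) "\<tau> + d \<le> t" "t < \<sigma> + d"
    | (after) "\<sigma> + d \<le> t"
    by linarith
  then show ?thesis
  proof cases
    case before
    then have J: "J t = Some k" using J' by (simp add: J'_def)
    then have "t < C k" using Proc_before_C[of k] by auto
    then show ?thesis using processing[OF J] before C_le_C'[of k] by (auto simp: S'_def)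
  next
    case inserted
    then show ?thesis using J' j tau C'_j d_pos by (auto simp: J'_def S'_def)
  next
    case delayed
    then have J: "J (t - d) = Some k" using J' d_pos by (simp add: J'_def)
    then have k: "k \<in> {1..m}" "t - d < C k" using processing Proc_before_C[of k] by auto
    then have "t < C' k" using delayed C_after_sigma[OF k(1)] by (auto simp: C'_def)
    then show ?thesis using processing[OF J] delayed d_pos by (auto simp: S'_def)
  next
    case after
    then have J: "J t = Some k" using J' d_pos tau_le_sigma by (simp add: J'_def)
    then have "k \<in> {1..m}" "t < C k" using processing Proc_before_C[of k] by auto
    then show ?thesis using processing[OF J] after d_pos tau_le_sigma by (auto simp: S'_def C'_def)
  qed
qed

lemma feasible': "feasible m v r 1 s2 J' S'"
proof -
  have "work J' S' k t < v k" if "J' t = Some k" for k t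
    using processing'[OF that] work'_C'(2) by blast
  moreover have "\<exists>t. v k \<le> work J' S' k t" if "k \<in> {1..m}" for k
    using work'_C'(1)[OF that] by (metis order_refl)
  ultimately show ?thesis
    using processing' J'_measurable S'_measurable by (simp add: feasible_def)
qed

lemma compl': "k \<in> {1..m} \<Longrightarrow> compl v J' S' k = C' k"
  unfolding compl_def by (rule Inf_level_set_eqI) (use work'_C' in auto)

lemma flow': "flow m v r J' S' = flow m v r J S + d * card {k \<in> {1..m}. \<tau> < C k \<and> C k \<le> \<sigma>}"
proof -
  have "flow m v r J' S' = (\<Sum>k\<in>{1..m}. C' k - r k)" unfolding flow_def using compl' by simp
  also have "\<dots> = (\<Sum>k\<in>{1..m}. (C k - r k) + (if \<tau> < C k \<and> C k \<le> \<sigma> then d else 0))"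
    by (rule sum.cong) (auto simp: C'_def)
  also have "\<dots> = flow m v r J S + (\<Sum>k\<in>{1..m}. if \<tau> < C k \<and> C k \<le> \<sigma> then d else 0)"
    by (simp add: sum.distrib flow_eq)
  also have "(\<Sum>k\<in>{1..m}. if \<tau> < C k \<and> C k \<le> \<sigma> then d else 0) =
      d * card {k \<in> {1..m}. \<tau> < C k \<and> C k \<le> \<sigma>}"
    by (simp add: sum.inter_filter[symmetric])
  finally show ?thesis .
qed

definition L :: real where "L = max Cmax \<sigma> + d"

lemma busy': "J' t \<noteq> None \<Longrightarrow> 0 \<le> t \<and> t \<le> L"
proof -
  assume "J' t \<noteq> None"
  then obtain k where k: "J' t = Some k" by auto
  then have p: "k \<in> {1..m}" "r k \<le> t" "t < C' k" using processing' by auto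
  have "C' k \<le> C k + d" using d_pos by (simp add: C'_def)
  then show ?thesis using p release_nonneg[of k] C_le_Cmax[of k] by (simp add: L_def)
qed

lemma energy': "energy 1 P1 P2 J' S' = energy 1 P1 P2 J S + P1 * (a + d) - P2 * a"
proof -
  let ?Q = "\<lambda>x::nat option. x \<noteq> None"
  let ?U1 = "{u. J u \<noteq> None \<and> S u = 1}" and ?U2 = "{u. J u \<noteq> None \<and> S u \<noteq> 1}"
  have "{u. J u \<noteq> None} \<inter> {\<sigma><..<\<sigma> + d} = {}" using idle by (auto simp: d_def)
  then have idle_U: "meas_upto ?U1 (\<sigma> + d) = meas_upto ?U1 \<sigma>" "meas_upto ?U2 (\<sigma> + d) = meas_upto ?U2 \<sigma>"
    using meas_upto_idle[OF _ sets_schedule(3)[of ?Q 1]] meas_upto_idle[OF _ sets_schedule(4)[of ?Q 1]]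
    by auto
  have L: "\<sigma> + d \<le> L" "Cmax \<le> L" using d_pos by (auto simp: L_def)
  have slow: "meas_upto {u. J' u \<noteq> None \<and> S' u = 1} L = meas_upto ?U1 L + a + d"
    using meas_upto_slow_set'[of ?Q L] delay_fun_eq'(4)[OF L(1) idle_U(1)] meas_upto_A[of L]
      meas_upto_delay_interval[of L] L tau_le_sigma d_pos by simp
  have fast: "meas_upto {u. J' u \<noteq> None \<and> S' u \<noteq> 1} L = meas_upto ?U2 L - a"
    using meas_upto_fast_set'[of ?Q L] delay_fun_eq'(4)[OF L(1) idle_U(2)] meas_upto_A[of L]
      L tau_le_sigma d_pos by simp
  have "energy 1 P1 P2 J' S' =
      P1 * meas_upto {u. J' u \<noteq> None \<and> S' u = 1} L + P2 * meas_upto {u. J' u \<noteq> None \<and> S' u \<noteq> 1} L"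
    by (rule energy_eq_meas_upto[OF J'_measurable S'_measurable busy'])
  then show ?thesis unfolding energy_eq[OF L(2)] slow fast by (simp add: algebra_simps)
qed

end

text \<open>Exchanging two jobs: from \<rho> on, the processing of a and b is given to a until their
  combined work since \<rho> covers the remaining work of a, which happens at \<theta>, and to b afterwards.\<close>

locale pair_exchange = feasible_schedule +
  fixes a b :: nat and \<rho> \<theta> :: real
  assumes jobs: "a \<in> {1..m}" "b \<in> {1..m}" "a \<noteq> b" and released: "r a \<le> \<rho>" "r b \<le> \<rho>"
    and rho_le_theta: "\<rho> \<le> \<theta>" and theta_less_C: "\<theta> < C a" "\<theta> < C b"
    and reach: "work J S a \<theta> - work J S a \<rho> + work J S b \<theta> - work J S b \<rho> = v a - work J S a \<rho>"
    and below_reach: "\<And>s. \<rho> \<le> s \<Longrightarrow> s < \<theta> \<Longrightarrow>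
      work J S a s - work J S a \<rho> + work J S b s - work J S b \<rho> < v a - work J S a \<rho>"
begin

definition J' :: "real \<Rightarrow> nat option" where
  "J' t = (if \<rho> \<le> t \<and> (J t = Some a \<or> J t = Some b) then (if t < \<theta> then Some a else Some b) else J t)"

lemma J'_measurable: "J' \<in> measurable lborel (count_space UNIV)"
proof -
  have "{x \<in> space lborel. \<rho> \<le> x \<and> (J x = Some a \<or> J x = Some b)} = {\<rho>..} \<inter> (Proc a \<union> Proc b)"
    by auto
  then have "{x \<in> space lborel. \<rho> \<le> x \<and> (J x = Some a \<or> J x = Some b)} \<in> sets lborel"
    using sets_Proc[of a] sets_Proc[of b] by simp
  then show ?thesis unfolding J'_def by (intro measurable_If J_measurable) auto
qed

lemma speeds': "J' u = Some k \<Longrightarrow> S u = 1 \<or> S u = s2"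
  using processing by (auto simp: J'_def split: if_splits)

lemma work'_eq:
  "work J' S k t = meas_upto {u. J' u = Some k \<and> S u = 1} t + s2 * meas_upto {u. J' u = Some k \<and> S u \<noteq> 1} t"
  by (rule work_eq_meas_upto[OF J'_measurable S_measurable speeds'])

lemma meas_upto_a':
  assumes R: "{x::real. R x} \<in> sets borel"
  defines "X \<equiv> {u. J u = Some a \<and> R (S u)}" and "Y \<equiv> {u. J u = Some b \<and> R (S u)}"
  shows "meas_upto {u. J' u = Some a \<and> R (S u)} t = meas_upto X (min \<rho> t)
    + (meas_upto X (max \<rho> (min \<theta> t)) - meas_upto X \<rho>) + (meas_upto Y (max \<rho> (min \<theta> t)) - meas_upto Y \<rho>)"
proof -
  have sets: "X \<in> sets lborel" "Y \<in> sets lborel"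
    unfolding X_def Y_def using sets_schedule(2)[OF R] by auto
  have "{u. J' u = Some a \<and> R (S u)} = (X \<inter> {..<\<rho>}) \<union> ((X \<union> Y) \<inter> {\<rho>..<\<theta>})"
    using jobs(3) by (auto simp: J'_def X_def Y_def)
  moreover have "X \<inter> Y = {}" using jobs(3) by (auto simp: X_def Y_def)
  ultimately show ?thesis
    using sets by (simp add: meas_upto_Un Int_Un_distrib2 Int_assoc meas_upto_Int_lessThan
        meas_upto_Int_atLeastLessThan Int_commute[of "{..<\<rho>}"] disjoint_iff)
qed

lemma meas_upto_b':
  assumes R: "{x::real. R x} \<in> sets borel"
  defines "X \<equiv> {u. J u = Some a \<and> R (S u)}" and "Y \<equiv> {u. J u = Some b \<and> R (S u)}"
  shows "meas_upto {u. J' u = Some b \<and> R (S u)} t = meas_upto Y (min \<rho> t)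
    + (meas_upto X (max \<theta> t) - meas_upto X \<theta>) + (meas_upto Y (max \<theta> t) - meas_upto Y \<theta>)"
proof -
  have sets: "X \<in> sets lborel" "Y \<in> sets lborel"
    unfolding X_def Y_def using sets_schedule(2)[OF R] by auto
  have "{u. J' u = Some b \<and> R (S u)} = (Y \<inter> {..<\<rho>}) \<union> ((X \<union> Y) \<inter> {\<theta>..})"
    using jobs(3) rho_le_theta by (auto simp: J'_def X_def Y_def)
  moreover have "X \<inter> Y = {}" using jobs(3) by (auto simp: X_def Y_def)
  moreover have "(Y \<inter> {..<\<rho>}) \<inter> ((X \<union> Y) \<inter> {\<theta>..}) = {}" using rho_le_theta by auto
  ultimately show ?thesis
    using sets by (simp add: meas_upto_Un meas_upto_Int_lessThan meas_upto_Int_atLeast)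
qed

lemma work'_a: "work J' S a t = work J S a (min \<rho> t)
    + (work J S a (max \<rho> (min \<theta> t)) - work J S a \<rho>) + (work J S b (max \<rho> (min \<theta> t)) - work J S b \<rho>)"
proof -
  have R: "{x::real. x = 1} \<in> sets borel" "{x::real. x \<noteq> 1} \<in> sets borel" by measurable
  show ?thesis
    unfolding work'_eq meas_upto_a'[OF R(1)] meas_upto_a'[OF R(2)] work_eq by (simp add: algebra_simps)
qed

lemma work'_b: "work J' S b t = work J S b (min \<rho> t)
    + (work J S a (max \<theta> t) - work J S a \<theta>) + (work J S b (max \<theta> t) - work J S b \<theta>)"
proof -
  have R: "{x::real. x = 1} \<in> sets borel" "{x::real. x \<noteq> 1} \<in> sets borel" by measurable
  show ?thesis
    unfolding work'_eq meas_upto_b'[OF R(1)] meas_upto_b'[OF R(2)] work_eq by (simp add: algebra_simps)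
qed

lemma work'_other: "k \<noteq> a \<Longrightarrow> k \<noteq> b \<Longrightarrow> work J' S k t = work J S k t"
proof -
  assume "k \<noteq> a" "k \<noteq> b"
  then have "{u. J' u = Some k \<and> S u = c} = {u. J u = Some k \<and> S u = c}"
    "{u. J' u = Some k \<and> S u \<noteq> c} = {u. J u = Some k \<and> S u \<noteq> c}" for c
    by (auto simp: J'_def)
  then show ?thesis using work'_eq[of k t] by (simp add: work_eq)
qed

lemma work'_a_theta: "work J' S a \<theta> = v a"
  using work'_a[of \<theta>] rho_le_theta reach by (simp add: min_def max_def)

lemma work'_a_less: "s < \<theta> \<Longrightarrow> work J' S a s < v a"
proof (cases "s < \<rho>")
  case True
  then show "work J' S a s < v a"
    using work'_a[of s] rho_le_theta work_less_before_C[OF jobs(1), of s] theta_less_C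
    by (simp add: min_def max_def)
next
  case False
  assume "s < \<theta>"
  then show "work J' S a s < v a"
    using work'_a[of s] below_reach[of s] False by (simp add: min_def max_def)
qed

definition M :: real where "M = max (C a) (C b)"

lemma work'_b_after_theta: "\<theta> \<le> t \<Longrightarrow> work J' S b t = work J S a t + work J S b t - v a"
  using work'_b[of t] rho_le_theta reach by (simp add: min_def max_def)

lemma work'_b_M: "work J' S b M = v b"
  using work'_b_after_theta[of M] theta_less_C work_after_C[OF jobs(1), of M] work_after_C[OF jobs(2), of M]
  by (simp add: M_def)

lemma work'_b_less: "s < M \<Longrightarrow> work J' S b s < v b"
proof (cases "\<theta> \<le> s")
  case True
  assume "s < M"
  then have "s < C a \<or> s < C b" by (simp add: M_def less_max_iff_disj)
  then have "work J S a s + work J S b s < v a + v b"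
    using work_less_before_C[OF jobs(1), of s] work_le_volume[OF jobs(2), of s]
      work_less_before_C[OF jobs(2), of s] work_le_volume[OF jobs(1), of s]
    by (elim disjE) (simp_all add: add_less_le_mono add_le_less_mono)
  then show ?thesis using work'_b_after_theta[OF True] by simp
next
  case False
  then show ?thesis
    using work'_b[of s] work_less_before_C[OF jobs(2), of "min \<rho> s"] rho_le_theta theta_less_C
    by (simp add: max_def)
qed

lemma processing':
  assumes J': "J' t = Some k"
  shows "k \<in> {1..m} \<and> r k \<le> t \<and> work J' S k t < v k \<and> (S t = 1 \<or> S t = s2)"
proof (cases "\<rho> \<le> t \<and> (J t = Some a \<or> J t = Some b)")
  case True
  then obtain c where c: "J t = Some c" "c = a \<or> c = b" by auto
  then have "t < C c" using Proc_before_C[of c] by auto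
  then have "t < \<theta> \<and> k = a \<or> t < M \<and> k = b"
    using J' True c by (auto simp: J'_def M_def split: if_splits)
  then show ?thesis
    using work'_a_less work'_b_less jobs released True processing[OF c(1)] by auto
next
  case False
  then have J: "J t = Some k" using J' unfolding J'_def by (simp only: if_False)
  have "work J' S k t = work J S k t"
    using work'_a[of t] work'_b[of t] work'_other[of k t] False J rho_le_theta
    by (cases "k = a \<or> k = b") (auto simp: min_def max_def)
  then show ?thesis using processing[OF J] by simp
qed

lemma feasible': "feasible m v r 1 s2 J' S"
proof -
  have "\<exists>t. v k \<le> work J' S k t" if k: "k \<in> {1..m}" for k
    using work'_a_theta work'_b_M work'_other[of k "C k"] work_at_C[OF k] by (metis order_refl)
  then show ?thesis using processing' J'_measurable S_measurable by (simp add: feasible_def)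
qed

lemma flow': "flow m v r J' S = flow m v r J S + (\<theta> - C a) + (M - C b)"
proof -
  have "compl v J' S a = \<theta>"
    unfolding compl_def by (rule Inf_level_set_eqI) (use work'_a_theta work'_a_less in simp_all)
  moreover have "compl v J' S b = M"
    unfolding compl_def by (rule Inf_level_set_eqI) (use work'_b_M work'_b_less in simp_all)
  moreover have "compl v J' S k = C k" if "k \<noteq> a" "k \<noteq> b" for k
    unfolding compl_def C_def using work'_other[OF that] by simp
  ultimately have "flow m v r J' S =
      (\<Sum>k\<in>{1..m}. C k - r k + (if k = a then \<theta> - C a else 0) + (if k = b then M - C b else 0))"
    unfolding flow_def using jobs(3) by (intro sum.cong) auto
  then show ?thesis using jobs by (simp add: sum.distrib flow_eq)
qed

lemma energy': "energy 1 P1 P2 J' S = energy 1 P1 P2 J S"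
proof -
  have "power 1 P1 P2 J' S t = power 1 P1 P2 J S t" for t
    by (auto simp: power_def J'_def)
  then show ?thesis by (simp add: energy_def)
qed

lemma objective'_less: "flow m v r J' S + energy 1 P1 P2 J' S < flow m v r J S + energy 1 P1 P2 J S"
  using flow' energy' theta_less_C by (simp add: M_def max_def)

end

text \<open>Filling idle time: the idle time in [\<rho>, \<theta>) is used to run a at speed 1, so that a completes
  at \<theta>, and the processing of a after \<theta> is dropped. Since P1 s2 \<le> P2, trading fast processing
  for s2 times as much slow processing does not increase the energy.\<close>

locale idle_fill = feasible_schedule +
  fixes a :: nat and \<rho> \<theta> :: real
  assumes job: "a \<in> {1..m}" and released: "r a \<le> \<rho>" and rho_le_theta: "\<rho> \<le> \<theta>"
    and theta_less_C: "\<theta> < C a"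
    and reach: "work J S a \<theta> - work J S a \<rho> + meas_upto Idle \<theta> - meas_upto Idle \<rho> = v a - work J S a \<rho>"
    and below_reach: "\<And>s. \<rho> \<le> s \<Longrightarrow> s < \<theta> \<Longrightarrow>
      work J S a s - work J S a \<rho> + meas_upto Idle s - meas_upto Idle \<rho> < v a - work J S a \<rho>"
begin

definition J' :: "real \<Rightarrow> nat option" where
  "J' t = (if \<rho> \<le> t \<and> t < \<theta> \<and> (J t = Some a \<or> J t = None) then Some a
    else if \<theta> \<le> t \<and> J t = Some a then None else J t)"

definition S' :: "real \<Rightarrow> real" where
  "S' t = (if J t = None then 1 else S t)"

lemma J'_measurable: "J' \<in> measurable lborel (count_space UNIV)"
proof -
  have "{x \<in> space lborel. \<rho> \<le> x \<and> x < \<theta> \<and> (J x = Some a \<or> J x = None)} = {\<rho>..<\<theta>} \<inter> (Proc a \<union> Idle)"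
    "{x \<in> space lborel. \<theta> \<le> x \<and> J x = Some a} = {\<theta>..} \<inter> Proc a"
    by auto
  then show ?thesis
    unfolding J'_def using sets_Proc[of a] sets_Idle by (intro measurable_If J_measurable) auto
qed

lemma S'_measurable: "S' \<in> borel_measurable lborel"
  unfolding S'_def using sets_Idle by (intro measurable_If S_measurable) auto

lemma speeds': "J' u = Some k \<Longrightarrow> S' u = 1 \<or> S' u = s2"
  using processing by (auto simp: J'_def S'_def split: if_splits)

lemma work'_eq:
  "work J' S' k t = meas_upto {u. J' u = Some k \<and> S' u = 1} t + s2 * meas_upto {u. J' u = Some k \<and> S' u \<noteq> 1} t"
  by (rule work_eq_meas_upto[OF J'_measurable S'_measurable speeds'])

lemma work'_a: "work J' S' a t = work J S a (min \<theta> t) + (meas_upto Idle (max \<rho> (min \<theta> t)) - meas_upto Idle \<rho>)"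
proof -
  have "{u. J' u = Some a \<and> S' u = 1} = (Slow a \<inter> {..<\<theta>}) \<union> (Idle \<inter> {\<rho>..<\<theta>})"
    "{u. J' u = Some a \<and> S' u \<noteq> 1} = Fast a \<inter> {..<\<theta>}"
    by (auto simp: J'_def S'_def)
  moreover have "(Slow a \<inter> {..<\<theta>}) \<inter> (Idle \<inter> {\<rho>..<\<theta>}) = {}" by auto
  ultimately show ?thesis
    using work'_eq[of a t] sets_Slow sets_Fast sets_Idle
    by (simp add: work_eq meas_upto_Un meas_upto_Int_lessThan meas_upto_Int_atLeastLessThan algebra_simps)
qed

lemma work'_other: "k \<noteq> a \<Longrightarrow> work J' S' k t = work J S k t"
proof -
  assume "k \<noteq> a"
  then have "{u. J' u = Some k \<and> S' u = 1} = Slow k" "{u. J' u = Some k \<and> S' u \<noteq> 1} = Fast k"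
    by (auto simp: J'_def S'_def)
  then show ?thesis using work'_eq[of k t] by (simp add: work_eq)
qed

lemma work'_a_theta: "work J' S' a \<theta> = v a"
  using work'_a[of \<theta>] rho_le_theta reach by (simp add: min_def max_def)

lemma work'_a_less: "s < \<theta> \<Longrightarrow> work J' S' a s < v a"
proof (cases "s < \<rho>")
  case True
  then show "work J' S' a s < v a"
    using work'_a[of s] rho_le_theta work_less_before_C[OF job, of s] theta_less_C
    by (simp add: min_def max_def)
next
  case False
  assume "s < \<theta>"
  then show "work J' S' a s < v a"
    using work'_a[of s] below_reach[of s] False by (simp add: min_def max_def)
qed

lemma processing':
  assumes J': "J' t = Some k"
  shows "k \<in> {1..m} \<and> r k \<le> t \<and> work J' S' k t < v k \<and> (S' t = 1 \<or> S' t = s2)"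
proof (cases "\<rho> \<le> t \<and> t < \<theta> \<and> (J t = Some a \<or> J t = None)")
  case True
  then show ?thesis using J' work'_a_less[of t] job released speeds'[OF J'] by (auto simp: J'_def)
next
  case False
  then have J: "J t = Some k" and "k = a \<Longrightarrow> t < \<rho>"
    using J' by (auto simp: J'_def split: if_splits)
  then have "work J' S' k t < v k"
    using work'_a_less[of t] rho_le_theta work'_other[of k t] processing[OF J] by (cases "k = a") auto
  then show ?thesis using processing[OF J] speeds'[OF J'] by simp
qed

lemma feasible': "feasible m v r 1 s2 J' S'"
proof -
  have "\<exists>t. v k \<le> work J' S' k t" if k: "k \<in> {1..m}" for k
    using work'_a_theta work'_other[of k "C k"] work_at_C[OF k] by (metis order_refl)
  then show ?thesis using processing' J'_measurable S'_measurable by (simp add: feasible_def)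
qed

lemma flow': "flow m v r J' S' = flow m v r J S + (\<theta> - C a)"
proof -
  have "compl v J' S' a = \<theta>"
    unfolding compl_def by (rule Inf_level_set_eqI) (use work'_a_theta work'_a_less in simp_all)
  moreover have "compl v J' S' k = C k" if "k \<noteq> a" for k
    unfolding compl_def C_def using work'_other[OF that] by simp
  ultimately have "flow m v r J' S' = (\<Sum>k\<in>{1..m}. C k - r k + (if k = a then \<theta> - C a else 0))"
    unfolding flow_def by (intro sum.cong) auto
  then show ?thesis using job by (simp add: sum.distrib flow_eq)
qed

lemma busy': "J' t \<noteq> None \<Longrightarrow> 0 \<le> t \<and> t \<le> Cmax"
  using busy_le_Cmax[of t] released release_nonneg[OF job] theta_less_C C_le_Cmax[OF job]
  by (auto simp: J'_def split: if_splits)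

lemma energy'_le:
  assumes "P1 * s2 \<le> P2"
  shows "energy 1 P1 P2 J' S' \<le> energy 1 P1 P2 J S"
proof -
  let ?U1 = "{u. J u \<noteq> None \<and> S u = 1}" and ?U2 = "{u. J u \<noteq> None \<and> S u \<noteq> 1}"
  let ?slow_after = "meas_upto (Slow a) Cmax - meas_upto (Slow a) \<theta>"
  let ?fast_after = "meas_upto (Fast a) Cmax - meas_upto (Fast a) \<theta>"
  have U1: "?U1 \<in> sets lborel" and U2: "?U2 \<in> sets lborel"
    using sets_schedule(3,4)[of "\<lambda>x. x \<noteq> None"] by auto
  have after: "Slow a \<inter> {\<theta>..} \<in> sets lborel" "Fast a \<inter> {\<theta>..} \<in> sets lborel"
    using sets_Slow sets_Fast by auto
  have "Slow a \<inter> {\<theta>..} \<subseteq> ?U1" "Fast a \<inter> {\<theta>..} \<subseteq> ?U2" by auto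
  have theta_le: "\<theta> \<le> Cmax" using theta_less_C C_le_Cmax[OF job] by simp
  have "{u. J' u \<noteq> None \<and> S' u = 1} = (?U1 - (Slow a \<inter> {\<theta>..})) \<union> (Idle \<inter> {\<rho>..<\<theta>})"
    by (auto simp: J'_def S'_def)
  then have "meas_upto {u. J' u \<noteq> None \<and> S' u = 1} Cmax =
      meas_upto (?U1 - (Slow a \<inter> {\<theta>..})) Cmax + meas_upto (Idle \<inter> {\<rho>..<\<theta>}) Cmax"
    using U1 after sets_Idle by (simp add: meas_upto_Un disjoint_iff)
  also have "meas_upto (?U1 - (Slow a \<inter> {\<theta>..})) Cmax = meas_upto ?U1 Cmax - ?slow_after"
    using meas_upto_Diff[OF U1 after(1) \<open>Slow a \<inter> {\<theta>..} \<subseteq> ?U1\<close>] meas_upto_Int_atLeast[OF sets_Slow[of a], of \<theta> Cmax] theta_le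
    by auto
  also have "meas_upto (Idle \<inter> {\<rho>..<\<theta>}) Cmax = meas_upto Idle \<theta> - meas_upto Idle \<rho>"
    using meas_upto_Int_atLeastLessThan[OF sets_Idle, of \<rho> \<theta> Cmax] theta_le rho_le_theta by simp
  finally have slow: "meas_upto {u. J' u \<noteq> None \<and> S' u = 1} Cmax =
      meas_upto ?U1 Cmax - ?slow_after + (meas_upto Idle \<theta> - meas_upto Idle \<rho>)" .
  have "{u. J' u \<noteq> None \<and> S' u \<noteq> 1} = ?U2 - (Fast a \<inter> {\<theta>..})" by (auto simp: J'_def S'_def)
  then have fast: "meas_upto {u. J' u \<noteq> None \<and> S' u \<noteq> 1} Cmax = meas_upto ?U2 Cmax - ?fast_after"
    using meas_upto_Diff[OF U2 after(2) \<open>Fast a \<inter> {\<theta>..} \<subseteq> ?U2\<close>] meas_upto_Int_atLeast[OF sets_Fast[of a], of \<theta> Cmax] theta_le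
    by auto
  have idle: "meas_upto Idle \<theta> = meas_upto Idle \<rho> + ?slow_after + s2 * ?fast_after"
    using reach work_after_C[OF job C_le_Cmax[OF job]] unfolding work_eq by (simp add: algebra_simps)
  have "energy 1 P1 P2 J' S' =
      P1 * meas_upto {u. J' u \<noteq> None \<and> S' u = 1} Cmax + P2 * meas_upto {u. J' u \<noteq> None \<and> S' u \<noteq> 1} Cmax"
    by (rule energy_eq_meas_upto[OF J'_measurable S'_measurable busy'])
  then have "energy 1 P1 P2 J' S' = energy 1 P1 P2 J S + (P1 * s2 - P2) * ?fast_after"
    unfolding energy_eq[OF order_refl] slow fast idle by (simp add: algebra_simps)
  moreover have "0 \<le> ?fast_after" using meas_upto_mono[OF sets_Fast theta_le] by simp
  ultimately show ?thesis using assms by (simp add: mult_nonpos_nonneg)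
qed

lemma objective'_less:
  "P1 * s2 \<le> P2 \<Longrightarrow> flow m v r J' S' + energy 1 P1 P2 J' S' < flow m v r J S + energy 1 P1 P2 J S"
  using flow' energy'_le[of P1 P2] theta_less_C by simp

end

locale optimal_schedule = feasible_schedule +
  fixes P1 P2 :: real
  assumes power_ratio: "P1 * s2 \<le> P2"
    and optimal: "\<And>J' S'. feasible m v r 1 s2 J' S' \<Longrightarrow>
      flow m v r J S + energy 1 P1 P2 J S \<le> flow m v r J' S' + energy 1 P1 P2 J' S'"
begin

lemma work_plus_idle_less_remaining:
  assumes a: "a \<in> {1..m}" and "r a \<le> \<rho>" "\<rho> \<le> s" "s < C a"
  shows "work J S a s - work J S a \<rho> + meas_upto Idle s - meas_upto Idle \<rho> < v a - work J S a \<rho>"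
proof (rule ccontr)
  let ?H = "\<lambda>s. work J S a s - work J S a \<rho> + meas_upto Idle s - meas_upto Idle \<rho>"
  assume "\<not> ?H s < v a - work J S a \<rho>"
  then have above: "v a - work J S a \<rho> \<le> ?H s" by simp
  have cont: "continuous_on UNIV ?H"
    by (intro continuous_intros continuous_work continuous_on_meas_upto sets_Idle)
  have start: "?H \<rho> < v a - work J S a \<rho>" using work_less_before_C[OF a, of \<rho>] assms by simp
  obtain \<theta> where "\<rho> < \<theta>" "\<theta> \<le> s" "?H \<theta> = v a - work J S a \<rho>"
      "\<And>x. \<rho> \<le> x \<Longrightarrow> x < \<theta> \<Longrightarrow> ?H x < v a - work J S a \<rho>"
    using first_reach[OF cont start \<open>\<rho> \<le> s\<close> above] by blast
  then interpret idle_fill m v r s2 J S a \<rho> \<theta>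
    by unfold_locales (use assms in auto)
  show False using optimal[OF feasible'] objective'_less[OF power_ratio] by simp
qed

lemma pair_work_less_remaining:
  assumes a: "a \<in> {1..m}" and "b \<in> {1..m}" "a \<noteq> b" "r a \<le> \<rho>" "r b \<le> \<rho>"
    and "\<rho> \<le> s" "s < C a" "s < C b"
  shows "work J S a s - work J S a \<rho> + work J S b s - work J S b \<rho> < v a - work J S a \<rho>"
proof (rule ccontr)
  let ?G = "\<lambda>s. work J S a s - work J S a \<rho> + work J S b s - work J S b \<rho>"
  assume "\<not> ?G s < v a - work J S a \<rho>"
  then have above: "v a - work J S a \<rho> \<le> ?G s" by simp
  have cont: "continuous_on UNIV ?G" by (intro continuous_intros continuous_work)
  have start: "?G \<rho> < v a - work J S a \<rho>" using work_less_before_C[OF a, of \<rho>] assms by simp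
  obtain \<theta> where "\<rho> < \<theta>" "\<theta> \<le> s" "?G \<theta> = v a - work J S a \<rho>"
      "\<And>x. \<rho> \<le> x \<Longrightarrow> x < \<theta> \<Longrightarrow> ?G x < v a - work J S a \<rho>"
    using first_reach[OF cont start \<open>\<rho> \<le> s\<close> above] by blast
  then interpret pair_exchange m v r s2 J S a b \<rho> \<theta>
    by unfold_locales (use assms in auto)
  show False using optimal[OF feasible'] objective'_less[of P1 P2] by simp
qed

lemma slow_down_bound:
  assumes "j \<in> {1..m}" "r j \<le> \<tau>" "\<tau> < C j" "C j \<le> \<sigma>" "0 < a"
    and "\<And>t. \<sigma> \<le> t \<Longrightarrow> t < \<sigma> + (s2 - 1) * a \<Longrightarrow> J t = None"
    and "A \<in> sets lborel" "A \<subseteq> Fast j \<inter> {..<\<tau>}" "measure lborel A = a"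
  shows "P2 \<le> (s2 - 1) * card {k \<in> {1..m}. \<tau> < C k \<and> C k \<le> \<sigma>} + P1 * s2"
proof -
  interpret slow_down m v r s2 J S j \<tau> \<sigma> a A
    by unfold_locales (use assms in auto)
  have "0 \<le> d * card {k \<in> {1..m}. \<tau> < C k \<and> C k \<le> \<sigma>} + P1 * (a + d) - P2 * a"
    using optimal[OF feasible'] flow' energy'[of P1 P2] by simp
  then have "0 \<le> a * ((s2 - 1) * card {k \<in> {1..m}. \<tau> < C k \<and> C k \<le> \<sigma>} + P1 * s2 - P2)"
    by (simp add: d_def algebra_simps)
  then show ?thesis using \<open>0 < a\<close> by (simp add: zero_le_mult_iff)
qed

end

context feasible_schedule
begin

lemma elapsed_le_idle_plus_work:
  assumes "0 \<le> \<rho>" "\<rho> \<le> t"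
  shows "t - \<rho> \<le> (meas_upto Idle t - meas_upto Idle \<rho>) + (\<Sum>k\<in>{1..m}. work J S k t - work J S k \<rho>)"
proof -
  have "u \<in> Idle \<union> (\<Union>k\<in>{1..m}. Proc k)" for u
  proof (cases "J u")
    case (Some k)
    then show ?thesis using processing[OF Some] by blast
  qed simp
  then have partition: "Idle \<union> (\<Union>k\<in>{1..m}. Proc k) = UNIV" by blast
  have elapsed: "meas_upto Idle x + (\<Sum>k\<in>{1..m}. meas_upto (Proc k) x) = x" if "0 \<le> x" for x
  proof -
    have "meas_upto (Idle \<union> (\<Union>k\<in>{1..m}. Proc k)) x = meas_upto Idle x + meas_upto (\<Union>k\<in>{1..m}. Proc k) x"
      using sets_Idle sets_Proc by (intro meas_upto_Un) auto
    moreover have "meas_upto (\<Union>k\<in>{1..m}. Proc k) x = (\<Sum>k\<in>{1..m}. meas_upto (Proc k) x)"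
      using sets_Proc by (intro meas_upto_UN) (auto simp: disjoint_family_on_def)
    moreover have "meas_upto UNIV x = x" using that by (simp add: meas_upto_def)
    ultimately show ?thesis unfolding partition by simp
  qed
  have "t - \<rho> = (meas_upto Idle t - meas_upto Idle \<rho>) + (\<Sum>k\<in>{1..m}. meas_upto (Proc k) t - meas_upto (Proc k) \<rho>)"
    using elapsed[of t] elapsed[of \<rho>] assms by (simp add: sum_subtractf)
  also have "\<dots> \<le> (meas_upto Idle t - meas_upto Idle \<rho>) + (\<Sum>k\<in>{1..m}. work J S k t - work J S k \<rho>)"
  proof (intro add_left_mono sum_mono)
    fix k
    have "Proc k = Slow k \<union> Fast k" "Slow k \<inter> Fast k = {}" by auto
    then have "meas_upto (Proc k) x = meas_upto (Slow k) x + meas_upto (Fast k) x" for x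
      using meas_upto_Un[OF sets_Slow sets_Fast] by simp
    moreover have "meas_upto (Fast k) t - meas_upto (Fast k) \<rho> \<le> s2 * (meas_upto (Fast k) t - meas_upto (Fast k) \<rho>)"
      using mult_right_mono[of 1 s2 "meas_upto (Fast k) t - meas_upto (Fast k) \<rho>"] s2
        meas_upto_mono[OF sets_Fast assms(2), of k] by simp
    ultimately show "meas_upto (Proc k) t - meas_upto (Proc k) \<rho> \<le> work J S k t - work J S k \<rho>"
      unfolding work_eq by (simp add: algebra_simps)
  qed
  finally show ?thesis .
qed

lemma last_completion_before:
  assumes "t0 < C j"
  obtains \<tau> where "t0 \<le> \<tau>" "\<tau> < C j" "\<And>k. k \<in> {1..m} \<Longrightarrow> \<tau> < C k \<Longrightarrow> C j \<le> C k"
proof -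
  let ?K = "insert t0 (C ` {k \<in> {1..m}. C k < C j})"
  have earlier: "C k \<le> Max ?K" if "k \<in> {1..m}" "C k < C j" for k
    using that by (intro Max_ge) auto
  show ?thesis
  proof (rule that[of "Max ?K"])
    show "t0 \<le> Max ?K" by (rule Max_ge) simp_all
    show "Max ?K < C j" using assms by (simp add: Max_less_iff)
    show "C j \<le> C k" if "k \<in> {1..m}" "Max ?K < C k" for k
    proof (rule ccontr)
      assume "\<not> C j \<le> C k"
      then have "C k \<le> Max ?K" by (intro earlier[OF that(1)]) simp
      with that(2) show False by linarith
    qed
  qed
qed

lemma Fast_early:
  assumes k: "k \<in> {1..m}" and pos: "0 < measure lborel (Fast k)"
  obtains t0 where "r k \<le> t0" "t0 < C k" "0 < meas_upto (Fast k) t0"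
proof -
  define \<mu> where "\<mu> = measure lborel (Fast k)"
  have "Fast k \<subseteq> {0..C k}" using Proc_before_C[of k] release_nonneg[OF k] by auto
  then have "meas_upto (Fast k) (C k) = \<mu>" by (simp add: meas_upto_eq_measure \<mu>_def)
  then have "\<mu> / 2 \<le> meas_upto (Fast k) (C k - \<mu> / 2)"
    using meas_upto_increment_le[OF sets_Fast, of "C k - \<mu> / 2" "C k" k] pos by (simp add: \<mu>_def)
  then have early: "0 < meas_upto (Fast k) (C k - \<mu> / 2)" using pos by (simp add: \<mu>_def)
  show ?thesis
  proof (rule that[OF _ _ early])
    show "r k \<le> C k - \<mu> / 2"
    proof (rule ccontr)
      assume "\<not> r k \<le> C k - \<mu> / 2"
      moreover have "Fast k \<subseteq> {r k..}" using processing by auto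
      ultimately show False using early meas_upto_subset_atLeast[of "Fast k" "r k"] by simp
    qed
    show "C k - \<mu> / 2 < C k" using pos by (simp add: \<mu>_def)
  qed
qed

lemma volume_eq_measure:
  assumes k: "k \<in> {1..m}"
  shows "v k = measure lborel (Slow k) + s2 * measure lborel (Fast k)"
proof -
  have "Slow k \<subseteq> {0..Cmax}" "Fast k \<subseteq> {0..Cmax}" using busy_le_Cmax by auto
  then show ?thesis
    using work_after_C[OF k C_le_Cmax[OF k]] by (simp add: work_eq meas_upto_eq_measure)
qed

lemma measure_Proc: "measure lborel (Proc k) = measure lborel (Slow k) + measure lborel (Fast k)"
proof -
  have "Proc k = Slow k \<union> Fast k" "Slow k \<inter> Fast k = {}" by auto
  moreover have "Proc k \<subseteq> {0..Cmax}" using busy_le_Cmax by auto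
  ultimately show ?thesis
    using meas_upto_Un[OF sets_Slow sets_Fast, of k k Cmax] by (simp add: meas_upto_eq_measure)
qed

end

section \<open>The flow-plus-energy instance\<close>

lemma release_plus_volume_le_compl:
  assumes feasible: "feasible n v r 1 1 J S" and i: "i \<in> {1..n}" and "0 < v i"
  shows "r i + v i \<le> compl v J S i"
proof -
  have J: "J \<in> measurable lborel (count_space UNIV)" and S: "S \<in> borel_measurable lborel"
    and processing: "\<And>t k. J t = Some k \<Longrightarrow> r k \<le> t \<and> S t = 1"
    using feasible by (auto simp: feasible_def)
  have "r i + v i \<le> t" if "v i \<le> work J S i t" for t
  proof -
    have no_fast: "{u. J u = Some i \<and> S u \<noteq> 1} = {}" using processing by auto
    have "work J S i t = measure lborel ({u. J u = Some i \<and> S u = 1} \<inter> {0..t})"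
      using work_eq_meas_upto[OF J S, of i 1 t] processing unfolding no_fast by (simp add: meas_upto_def)
    also have "\<dots> \<le> measure lborel {r i..t}"
    proof (rule measure_mono_fmeasurable)
      show "{u. J u = Some i \<and> S u = 1} \<inter> {0..t} \<subseteq> {r i..t}" using processing by auto
      show "{u. J u = Some i \<and> S u = 1} \<inter> {0..t} \<in> sets lborel"
        using sets_lborel_schedule(3)[OF J S, of "\<lambda>x. x = Some i" 1] by simp
    qed (rule fmeasurable_Icc)
    finally show ?thesis using that \<open>0 < v i\<close> by (cases "r i \<le> t") auto
  qed
  moreover obtain b where "v i \<le> work J S i b" using feasible i unfolding feasible_def by blast
  ultimately show ?thesis unfolding compl_def by (intro cInf_greatest) auto
qed

text \<open>The jobs 1..n are those of the budget instance, n + 1, ..., 2n + 1 are the added jobs.\<close>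

locale FE_schedule = optimal_schedule +
  fixes n :: nat and Cm :: real
  assumes m: "m = 2 * n + 1" and n_pos: "1 \<le> n"
    and release_first_added: "r (n + 1) = 0"
    and release_late: "\<And>k. k \<in> {n + 2..2 * n + 1} \<Longrightarrow> r k = Cm + (s2 + 1) * (\<Sum>i\<in>{1..n}. v i)"
    and original_done_by_Cm: "\<And>i. i \<in> {1..n} \<Longrightarrow> r i + v i \<le> Cm"
    and P2_eq: "P2 = (real n + 3 / 2) * (s2 - 1) + P1 * s2"
begin

definition V :: real where "V = (\<Sum>i\<in>{1..n}. v i)"

definition T :: real where "T = Cm + (s2 + 1) * V"

lemma release_late_T: "k \<in> {n + 2..2 * n + 1} \<Longrightarrow> r k = T"
  using release_late by (simp add: T_def V_def)

lemma sum_jobs: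
  "(\<Sum>k\<in>{1..m}. f k) = (\<Sum>k\<in>{1..n}. f k) + f (n + 1) + (\<Sum>k\<in>{n + 2..2 * n + 1}. f k)"
proof -
  have "(\<Sum>k\<in>{1..n + (n + 1)}. f k) = (\<Sum>k\<in>{1..n}. f k) + (\<Sum>k\<in>{n + 1..n + (n + 1)}. f k)"
    by (rule sum.ub_add_nat) simp
  also have "(\<Sum>k\<in>{n + 1..n + (n + 1)}. f k) = f (n + 1) + (\<Sum>k\<in>{n + 2..2 * n + 1}. f k)"
    by (subst sum.atLeast_Suc_atMost) (simp_all add: numeral_2_eq_2)
  finally show ?thesis by (simp add: m mult_2 add.assoc)
qed

lemma volume_le_V: "i \<in> {1..n} \<Longrightarrow> v i \<le> V"
  unfolding V_def using volume_pos m by (intro member_le_sum) (auto intro: less_imp_le)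

lemma V_pos: "0 < V"
  using volume_pos[of 1] volume_le_V[of 1] n_pos m by simp

lemma first_added_work_le:
  assumes i: "i \<in> {1..n}" and t: "r i \<le> t" "t < C i"
  shows "work J S (n + 1) t - work J S (n + 1) (r i) \<le> v i"
proof -
  have jobs: "i \<in> {1..m}" "n + 1 \<in> {1..m}" "i \<noteq> n + 1" using i m by auto
  have "r (n + 1) \<le> r i" using release_first_added release_nonneg[OF jobs(1)] by simp
  note pair = pair_work_less_remaining[OF jobs order_refl this]
  let ?G = "\<lambda>s. work J S i s - work J S i (r i) + work J S (n + 1) s - work J S (n + 1) (r i)"
  have work_i: "0 \<le> work J S i s - work J S i (r i)" if "r i \<le> s" for s
    using work_mono[OF that] by simp
  have G: "?G s < v i" if "r i \<le> s" "s < C i" "s < C (n + 1)" for s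
    using pair[OF that] work_before_release[of "r i" i] by simp
  show ?thesis
  proof (cases "t < C (n + 1)")
    case True
    then show ?thesis using G[OF t True] work_i[OF t(1)] by simp
  next
    case False
    then have after: "work J S (n + 1) t = work J S (n + 1) (C (n + 1))"
      using work_after_C[OF jobs(2)] work_at_C[OF jobs(2)] by simp
    show ?thesis
    proof (cases "C (n + 1) \<le> r i")
      case True
      then show ?thesis
        using after work_after_C[OF jobs(2), of "r i"] work_at_C[OF jobs(2)] volume_pos[OF jobs(1)] by simp
    next
      case False
      have "?G (C (n + 1)) \<le> v i"
      proof (rule continuous_le_at_right_end[of ?G "r i"])
        show "continuous_on UNIV ?G" by (intro continuous_intros continuous_work)
        show "r i < C (n + 1)" using False by simp
        fix s assume "r i \<le> s" "s < C (n + 1)"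
        moreover from this have "s < C i" using \<open>\<not> t < C (n + 1)\<close> t by simp
        ultimately show "?G s \<le> v i" using G[of s] by simp
      qed
      then show ?thesis using after work_i[of "C (n + 1)"] False by simp
    qed
  qed
qed

text \<open>If an original job i were still unfinished shortly before T, then from r i on the machine
  would have been busy with i, idle, or processing the other original jobs (work at most V - v i)
  and job n + 1 (work at most v i); this accounts for less than the elapsed time.\<close>

lemma original_job_before_T: "i \<in> {1..n} \<Longrightarrow> C i < T"
proof (rule ccontr)
  assume i: "i \<in> {1..n}" and "\<not> C i < T"
  have ii: "i \<in> {1..m}" using i m by auto
  define t where "t = T - v i / 2"
  let ?inc = "\<lambda>k. work J S k t - work J S k (r i)"
  have "t - r i = (Cm - r i) + s2 * V + V - v i / 2" by (simp add: t_def T_def algebra_simps)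
  moreover have "V \<le> s2 * V" using s2 V_pos by simp
  ultimately have elapsed: "V + v i \<le> t - r i"
    using original_done_by_Cm[OF i] volume_le_V[OF i] volume_pos[OF ii] by linarith
  have t: "r i \<le> t" "t < C i"
    using elapsed V_pos volume_pos[OF ii] \<open>\<not> C i < T\<close> by (auto simp: t_def)
  have "(\<Sum>k\<in>{1..n}. ?inc k) = ?inc i + (\<Sum>k\<in>{1..n} - {i}. ?inc k)"
    using i by (simp add: sum.remove)
  also have "?inc k \<le> v k" if "k \<in> {1..n}" for k
    using work_le_volume[of k t] work_nonneg[of k "r i"] that m by auto
  then have "(\<Sum>k\<in>{1..n} - {i}. ?inc k) \<le> (\<Sum>k\<in>{1..n} - {i}. v k)"
    by (intro sum_mono) auto
  also have "(\<Sum>k\<in>{1..n} - {i}. v k) = V - v i"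
    using i by (simp add: V_def sum_diff1)
  finally have original: "(\<Sum>k\<in>{1..n}. ?inc k) \<le> ?inc i + (V - v i)" by simp
  have "(\<Sum>k\<in>{n + 2..2 * n + 1}. ?inc k) = 0"
    using release_late_T work_before_release t volume_pos[OF ii] by (simp add: t_def)
  then have "(\<Sum>k\<in>{1..m}. ?inc k) \<le> ?inc i + V"
    using sum_jobs[of ?inc] original first_added_work_le[OF i t] by simp
  moreover have "?inc i + (meas_upto Idle t - meas_upto Idle (r i)) < v i"
    using work_plus_idle_less_remaining[OF ii order_refl t] work_before_release[of "r i" i] by simp
  ultimately show False
    using elapsed_le_idle_plus_work[OF release_nonneg[OF ii] t(1)] elapsed by simp
qed

lemma idle_gap_first_added:
  assumes "C (n + 1) < T"
  obtains \<sigma> g where "C (n + 1) \<le> \<sigma>" "0 < g" "\<And>t. \<sigma> \<le> t \<Longrightarrow> t < \<sigma> + g \<Longrightarrow> J t = None"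
    "card {k \<in> {1..m}. \<tau> < C k \<and> C k \<le> \<sigma>} \<le> n + 1"
proof -
  define X where "X = Max (C ` {1..n + 1})"
  have C_le_X: "k \<in> {1..n + 1} \<Longrightarrow> C k \<le> X" for k unfolding X_def by (rule Max_ge) auto
  have "C k < T" if "k \<in> {1..n + 1}" for k
    using original_job_before_T[of k] assms that by (cases "k = n + 1") auto
  then have "X < T" unfolding X_def by (simp add: Max_less_iff)
  have late_after_T: "T < C k" if "k \<in> {1..m}" "k \<notin> {1..n + 1}" for k
  proof -
    have "k \<in> {n + 2..2 * n + 1}" using that m by auto
    then show ?thesis using release_less_C[OF that(1)] release_late_T by simp
  qed
  have idle: "J t = None" if "X \<le> t" "t < T" for t
  proof (cases "J t")
    case (Some k)
    then have k: "k \<in> {1..m}" "t < C k" using processing Proc_before_C[of k] by auto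
    show ?thesis
    proof (cases "k \<in> {1..n + 1}")
      case True
      then show ?thesis using C_le_X[OF True] k(2) that(1) by simp
    next
      case False
      then have "k \<in> {n + 2..2 * n + 1}" using k(1) m by auto
      then show ?thesis using release_late_T[of k] processing[OF Some] that(2) by simp
    qed
  qed simp
  have "k \<in> {1..n + 1}" if "k \<in> {1..m}" "C k \<le> X" for k
    using late_after_T[OF that(1)] that(2) \<open>X < T\<close> by (cases "k \<in> {1..n + 1}") auto
  then have "{k \<in> {1..m}. \<tau> < C k \<and> C k \<le> X} \<subseteq> {1..n + 1}" by auto
  from card_mono[OF finite_atLeastAtMost this]
  have card: "card {k \<in> {1..m}. \<tau> < C k \<and> C k \<le> X} \<le> n + 1" by simp
  show ?thesis
  proof (rule that[of X "T - X"])
    show "C (n + 1) \<le> X" by (rule C_le_X) simp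
    show "0 < T - X" using \<open>X < T\<close> by simp
    show "J t = None" if "X \<le> t" "t < X + (T - X)" for t using idle that by simp
  qed (rule card)
qed

lemma idle_gap_late:
  assumes j: "j \<in> {1..m}" and "T \<le> C j"
    and no_completion: "\<And>k. k \<in> {1..m} \<Longrightarrow> \<tau> < C k \<Longrightarrow> C j \<le> C k"
  obtains \<sigma> g where "C j \<le> \<sigma>" "0 < g" "\<And>t. \<sigma> \<le> t \<Longrightarrow> t < \<sigma> + g \<Longrightarrow> J t = None"
    "card {k \<in> {1..m}. \<tau> < C k \<and> C k \<le> \<sigma>} \<le> n + 1"
proof -
  have "k \<in> {n + 1..2 * n + 1}" if "k \<in> {1..m}" "\<tau> < C k" for k
  proof (rule ccontr)
    assume "k \<notin> {n + 1..2 * n + 1}"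
    then have "k \<in> {1..n}" using that(1) m by auto
    then show False using original_job_before_T[of k] no_completion[OF that] \<open>T \<le> C j\<close> by simp
  qed
  then have "{k \<in> {1..m}. \<tau> < C k \<and> C k \<le> Cmax + 1} \<subseteq> {n + 1..2 * n + 1}" by auto
  from card_mono[OF finite_atLeastAtMost this]
  have "card {k \<in> {1..m}. \<tau> < C k \<and> C k \<le> Cmax + 1} \<le> n + 1" by simp
  moreover have "J t = None" if "Cmax + 1 \<le> t" for t
    using busy_le_Cmax[of t] that by (cases "J t") auto
  ultimately show ?thesis using that[of "Cmax + 1" 1] C_le_Cmax[OF j] by simp
qed

lemma added_job_Fast_null:
  assumes j: "j \<in> {n + 1..2 * n + 1}"
  shows "measure lborel (Fast j) = 0"
proof (rule ccontr)
  have j': "j \<in> {1..m}" using j m by auto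
  assume "measure lborel (Fast j) \<noteq> 0"
  then have "0 < measure lborel (Fast j)" using measure_nonneg[of lborel "Fast j"] by linarith
  then obtain t0 where t0: "r j \<le> t0" "t0 < C j" "0 < meas_upto (Fast j) t0"
    using Fast_early[OF j'] by blast
  obtain \<tau> where tau: "t0 \<le> \<tau>" "\<tau> < C j" and no_completion: "\<And>k. k \<in> {1..m} \<Longrightarrow> \<tau> < C k \<Longrightarrow> C j \<le> C k"
    using last_completion_before[OF t0(2)] by blast
  have "r j \<le> \<tau>" "0 \<le> \<tau>" using t0 tau release_nonneg[OF j'] by auto
  obtain \<sigma> g where gap: "C j \<le> \<sigma>" "0 < g" "\<And>t. \<sigma> \<le> t \<Longrightarrow> t < \<sigma> + g \<Longrightarrow> J t = None"
      and card: "card {k \<in> {1..m}. \<tau> < C k \<and> C k \<le> \<sigma>} \<le> n + 1"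
  proof (cases "C j < T")
    case True
    then have "j = n + 1" using release_less_C[OF j'] release_late_T[of j] j by (cases "j = n + 1") auto
    then show ?thesis using idle_gap_first_added True that by blast
  next
    case False
    then have "T \<le> C j" by simp
    then show ?thesis using idle_gap_late[OF j' _ no_completion] that by blast
  qed
  define a where "a = min (meas_upto (Fast j) \<tau>) (g / (s2 - 1))"
  have "0 < meas_upto (Fast j) \<tau>" using meas_upto_mono[OF sets_Fast tau(1), of j] t0(3) by simp
  then have a: "0 < a" "a \<le> meas_upto (Fast j) \<tau>" "\<sigma> + (s2 - 1) * a \<le> \<sigma> + g"
    using gap(2) s2 by (auto simp: a_def min_def field_simps)
  obtain A where "A \<in> sets lborel" "A \<subseteq> Fast j \<inter> {..<\<tau>}" "measure lborel A = a"
    using obtain_subset_measure[OF sets_Fast \<open>0 \<le> \<tau>\<close> _ a(2)] a(1) by auto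
  moreover have "J t = None" if "\<sigma> \<le> t" "t < \<sigma> + (s2 - 1) * a" for t
    using gap(3) a(3) that by simp
  ultimately have "P2 \<le> (s2 - 1) * card {k \<in> {1..m}. \<tau> < C k \<and> C k \<le> \<sigma>} + P1 * s2"
    using slow_down_bound[OF j' \<open>r j \<le> \<tau>\<close> tau(2) gap(1) a(1)] by blast
  also have "\<dots> \<le> (s2 - 1) * (n + 1) + P1 * s2" using card s2 by simp
  finally have "(s2 - 1) * (real n + 3 / 2) \<le> (s2 - 1) * (real n + 1)"
    using P2_eq by (simp add: algebra_simps)
  then show False using s2 by (simp add: mult_le_cancel_left)
qed

lemma added_job_avg_speed: "j \<in> {n + 1..2 * n + 1} \<Longrightarrow> avg_speed v J j = 1"
  using volume_eq_measure[of j] measure_Proc[of j] added_job_Fast_null[of j] volume_pos[of j] m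
  by (simp add: avg_speed_def proc_time_def)

end

lemma Yval_pos:
  assumes "1 < s2" "0 < (\<Sum>j\<in>{1..n}. v j)"
    and "P1 * (\<Sum>j\<in>{1..n}. v j) < B" "B < P2 * (\<Sum>j\<in>{1..n}. v j) / s2"
  shows "0 < Yval n v s2 P1 P2 B"
proof -
  let ?V = "\<Sum>j\<in>{1..n}. v j"
  have "P1 * ?V * s2 < B * s2" using assms(1,3) by simp
  also have "B * s2 < P2 * ?V" using assms(1,4) by (simp add: field_simps)
  finally have "(P1 * s2) * ?V < P2 * ?V" by (simp add: mult_ac)
  then have "P1 * s2 < P2" using assms(2) by simp
  then show ?thesis using assms by (simp add: Yval_def Let_def)
qed

lemma makespan_ge_release_plus_volume:
  assumes "feasible n v r 1 1 J S" "\<forall>j\<in>{1..n}. 0 < v j" "i \<in> {1..n}"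
  shows "r i + v i \<le> makespan n v J S"
proof -
  have "r i + v i \<le> compl v J S i" using release_plus_volume_le_compl assms by blast
  also have "\<dots> \<le> makespan n v J S" unfolding makespan_def using assms(3) by (intro Max_ge) auto
  finally show ?thesis .
qed

lemma FE_schedule_construction:
  assumes s2: "1 < s2" and n: "1 \<le> n" and v: "\<forall>j\<in>{1..n}. 0 < v j" and r: "\<forall>j\<in>{1..n}. 0 \<le> r j"
    and B: "P1 * (\<Sum>j\<in>{1..n}. v j) < B" "B < P2 * (\<Sum>j\<in>{1..n}. v j) / s2"
    and Cm: "\<And>i. i \<in> {1..n} \<Longrightarrow> r i + v i \<le> Cm"
    and opt: "optimal_FE (2 * n + 1) (FE_vol n v s2 P1 P2 B Cm) (FE_rel n v r s2 Cm) 1 s2 P1 (FE_P2 n s2 P1) J S"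
  shows "FE_schedule (2 * n + 1) (FE_vol n v s2 P1 P2 B Cm) (FE_rel n v r s2 Cm) s2 J S P1 (FE_P2 n s2 P1) n Cm"
proof -
  let ?V = "\<Sum>j\<in>{1..n}. v j"
  have V: "0 < ?V" using v n by (intro sum_pos) auto
  have "0 < Cm" using Cm[of 1] v r n by force
  moreover have "0 < s2 * ?V" using s2 V by simp
  ultimately have "0 < FE_vol n v s2 P1 P2 B Cm k" if "k \<in> {1..2 * n + 1}" for k
    using that v Yval_pos[OF s2 V B] by (auto simp: FE_vol_def Let_def algebra_simps)
  moreover have "0 \<le> FE_rel n v r s2 Cm k" if "k \<in> {1..2 * n + 1}" for k
    using that r V s2 \<open>0 < Cm\<close> by (auto simp: FE_rel_def Let_def intro!: add_nonneg_nonneg)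
  ultimately show ?thesis
    using opt s2 n Cm by unfold_locales (auto simp: optimal_FE_def FE_P2_def FE_vol_def FE_rel_def Let_def)
qed

theorem mainTheorem15:
  fixes n :: nat and v r :: "nat \<Rightarrow> real" and s2 P1 P2 B :: real
    and J1 J :: "real \<Rightarrow> nat option" and S1 S :: "real \<Rightarrow> real"
  assumes "1 < s2" and "0 < P1" and "P1 < P2"
    and "\<forall>j\<in>{1..n}. 0 < v j" and "\<forall>j\<in>{1..n}. 0 \<le> r j" and "\<exists>j\<in>{1..n}. r j = 0"
    and "P1 * (\<Sum>j\<in>{1..n}. v j) < B" and "B < P2 * (\<Sum>j\<in>{1..n}. v j) / s2"
    and "is_SRPT n v r 1 J1 S1"
    and "optimal_FE (2 * n + 1)
           (FE_vol n v s2 P1 P2 B (makespan n v J1 S1))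
           (FE_rel n v r s2 (makespan n v J1 S1))
           1 s2 P1 (FE_P2 n s2 P1) J S"
  shows "\<forall>j\<in>{n + 1..2 * n + 1}.
           avg_speed (FE_vol n v s2 P1 P2 B (makespan n v J1 S1)) J j = 1"
proof -
  have "1 \<le> n" using assms(6) by auto
  moreover have "r i + v i \<le> makespan n v J1 S1" if "i \<in> {1..n}" for i
    using makespan_ge_release_plus_volume assms(4,9) that by (auto simp: is_SRPT_def)
  ultimately interpret FE_schedule "2 * n + 1" "FE_vol n v s2 P1 P2 B (makespan n v J1 S1)"
      "FE_rel n v r s2 (makespan n v J1 S1)" s2 J S P1 "FE_P2 n s2 P1" n "makespan n v J1 S1"
    using FE_schedule_construction assms(1,4,5,7,8,10) by blast
  show ?thesis using added_job_avg_speed by blast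
qed

end
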